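(* Let $p,q\in\Bbbk^\times$. Then $A(q)\cong A(p)$ if and only if $p=q^{\pm1}$.
   Context: $\Bbbk$ is an algebraically closed field of characteristic zero. Paths are written left to right. Let $Q$ be the quiver with vertices $e_1,e_2$, arrows $a,c:e_1\to e_2$ and $b,d:e_2\to e_1$; for $q\in\Bbbk^\times$, $A(q)=\Bbbk Q/(ab-cd,\ ba-q\,dc)$. *)

theory Defs
  imports "HOL-Computational_Algebra.Polynomial" "HOL-Algebra.QuotRing" "HOL-Algebra.Ideal"
begin

datatype vert = E1 | E2
datatype arr = Arr_a | Arr_b | Arr_c | Arr_d

fun src :: "arr \<Rightarrow> vert" where
  "src Arr_a = E1" | "src Arr_c = E1" | "src Arr_b = E2" | "src Arr_d = E2"
fun tgt :: "arr \<Rightarrow> vert" where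
  "tgt Arr_a = E2" | "tgt Arr_c = E2" | "tgt Arr_b = E1" | "tgt Arr_d = E1"

text \<open>A path is a start vertex together with a list of arrows, read left to right
  (the trivial path at v is (v, [])).\<close>
type_synonym path = "vert \<times> arr list"

fun valid_from :: "vert \<Rightarrow> arr list \<Rightarrow> bool" where
  "valid_from v [] = True"
| "valid_from v (x # xs) = (src x = v \<and> valid_from (tgt x) xs)"

definition valid_path :: "path \<Rightarrow> bool" where
  "valid_path p = valid_from (fst p) (snd p)"

fun end_from :: "vert \<Rightarrow> arr list \<Rightarrow> vert" where
  "end_from v [] = v"
| "end_from v (x # xs) = end_from (tgt x) xs"

definition path_end :: "path \<Rightarrow> vert" where
  "path_end p = end_from (fst p) (snd p)"

definition composable :: "path \<Rightarrow> path \<Rightarrow> bool" where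
  "composable p q = (path_end p = fst q)"

definition concat_path :: "path \<Rightarrow> path \<Rightarrow> path" where
  "concat_path p q = (fst p, snd p @ snd q)"

definition supp :: "(path \<Rightarrow> 'k::zero) \<Rightarrow> path set" where
  "supp f = {x. f x \<noteq> 0}"

definition path_mult :: "(path \<Rightarrow> 'k::field) \<Rightarrow> (path \<Rightarrow> 'k) \<Rightarrow> (path \<Rightarrow> 'k)" where
  "path_mult f g = (\<lambda>r. \<Sum>p\<in>supp f. \<Sum>q\<in>supp g.
      (if composable p q \<and> concat_path p q = r then f p * g q else 0))"

definition path_algebra :: "(path \<Rightarrow> 'k::field) ring" where
  "path_algebra = \<lparr>carrier = {f. finite (supp f) \<and> (\<forall>x. f x \<noteq> 0 \<longrightarrow> valid_path x)},
     mult = path_mult,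
     one = (\<lambda>x. if x = (E1, []) \<or> x = (E2, []) then 1 else 0),
     zero = (\<lambda>x. 0),
     add = (\<lambda>f g x. f x + g x)\<rparr>"

definition bpath :: "path \<Rightarrow> (path \<Rightarrow> 'k::field)" where
  "bpath p = (\<lambda>x. if x = p then 1 else 0)"

definition scal :: "'k::field \<Rightarrow> (path \<Rightarrow> 'k) \<Rightarrow> (path \<Rightarrow> 'k)" where
  "scal c f = (\<lambda>x. c * f x)"

definition rel1 :: "path \<Rightarrow> 'k::field" where
  "rel1 = (\<lambda>x. bpath (E1, [Arr_a, Arr_b]) x - bpath (E1, [Arr_c, Arr_d]) x)"

definition rel2 :: "'k::field \<Rightarrow> path \<Rightarrow> 'k" where
  "rel2 q = (\<lambda>x. bpath (E2, [Arr_b, Arr_a]) x - q * bpath (E2, [Arr_d, Arr_c]) x)"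

definition rel_ideal :: "'k::field \<Rightarrow> (path \<Rightarrow> 'k) set" where
  "rel_ideal q = genideal path_algebra {rel1, rel2 q}"

definition A_alg :: "'k::field \<Rightarrow> (path \<Rightarrow> 'k) set ring" where
  "A_alg q = path_algebra Quot rel_ideal q"

definition A_scalar :: "'k::field \<Rightarrow> 'k \<Rightarrow> (path \<Rightarrow> 'k) set" where
  "A_scalar q c = rel_ideal q +>\<^bsub>path_algebra\<^esub> scal c \<one>\<^bsub>path_algebra\<^esub>"

text \<open>Isomorphism of k-algebras: a ring isomorphism commuting with the structure maps
  from k (equivalently, a k-linear ring isomorphism).\<close>
definition A_iso :: "'k::field \<Rightarrow> 'k \<Rightarrow> bool" where
  "A_iso q p = (\<exists>\<phi>. \<phi> \<in> ring_iso (A_alg q) (A_alg p) \<and> (\<forall>c. \<phi> (A_scalar q c) = A_scalar p c))"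

definition alg_closed :: "'k::field itself \<Rightarrow> bool" where
  "alg_closed _ = (\<forall>f :: 'k poly. degree f > 0 \<longrightarrow> (\<exists>x. poly f x = 0))"

end

(*
  An isomorphism of k-algebras A(q) -> A(p) is studied through representatives in kQ of
  images. Since both sets of relations are homogeneous of degree two, the components of
  length at most one and the length-two component modulo the relations do not depend on
  the representative. The coefficients of the trivial paths are characters of A(q), so the
  isomorphism fixes or exchanges the vertex idempotents modulo arrows; in the second case it
  is composed with the isomorphism A(p) -> A(1/p) that exchanges the vertices and the
  arrows a, b and rescales c, d. Once the vertices are fixed, the arrows out of each vertex are
  acted on by an invertible 2 x 2 matrix modulo longer paths, and comparing the length-two
  components of the images of ab = cd and ba = q dc forces (p - q)(pq - 1) = 0. Conversely
  the same rescaled exchange gives an isomorphism A(q) -> A(1/q).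
*)
theory Submission
  imports Defs
begin

section \<open>The path algebra\<close>

lemma sum_triangle_swap:
  fixes F :: "nat \<Rightarrow> nat \<Rightarrow> 'a::comm_monoid_add"
  shows "(\<Sum>j\<le>n. \<Sum>i\<le>j. F i j) = (\<Sum>i\<le>n. \<Sum>j=i..n. F i j)"
proof -
  have "(\<Sum>j\<le>n. \<Sum>i\<le>j. F i j) = (\<Sum>j\<le>n. \<Sum>i\<in>{i\<in>{..n}. i \<le> j}. F i j)"
    by (intro sum.cong) auto
  also have "\<dots> = (\<Sum>i\<le>n. \<Sum>j\<in>{j\<in>{..n}. i \<le> j}. F i j)"
    by (rule sum.swap_restrict[symmetric]) auto
  also have "\<dots> = (\<Sum>i\<le>n. \<Sum>j=i..n. F i j)"
    by (intro sum.cong) auto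
  finally show ?thesis .
qed

lemma end_from_append [simp]: "end_from v (xs @ ys) = end_from (end_from v xs) ys"
  by (induction xs arbitrary: v) auto

lemma valid_from_append [simp]:
  "valid_from v (xs @ ys) = (valid_from v xs \<and> valid_from (end_from v xs) ys)"
  by (induction xs arbitrary: v) auto

lemma all_vert_iff: "(\<forall>v. P v) \<longleftrightarrow> P E1 \<and> P E2"
  by (auto intro: vert.induct)

lemma src_neq_tgt: "src x \<noteq> tgt x"
  by (cases x) auto

lemma composable_concat_path_iff:
  "(composable r s \<and> concat_path r s = (v, xs)) \<longleftrightarrow>
   (\<exists>i\<le>length xs. r = (v, take i xs) \<and> s = (end_from v (take i xs), drop i xs))"
proof
  assume "composable r s \<and> concat_path r s = (v, xs)"
  then show "\<exists>i\<le>length xs. r = (v, take i xs) \<and> s = (end_from v (take i xs), drop i xs)"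
    by (cases r; cases s; intro exI[of _ "length (snd r)"])
      (auto simp: composable_def concat_path_def path_end_def)
qed (auto simp: composable_def concat_path_def path_end_def)

lemma path_mult_eq_sum:
  fixes f g :: "path \<Rightarrow> 'k::field"
  assumes "finite (supp f)" and "finite (supp g)"
  shows "path_mult f g (v, xs) =
    (\<Sum>i\<le>length xs. f (v, take i xs) * g (end_from v (take i xs), drop i xs))"
proof -
  define F where "F = (\<lambda>(r::path, s::path).
    if composable r s \<and> concat_path r s = (v, xs) then f r * g s else 0)"
  define cut where "cut = (\<lambda>i. ((v, take i xs), (end_from v (take i xs), drop i xs)))"
  have F_zero: "F rs = 0" if "rs \<notin> supp f \<times> supp g \<inter> cut ` {..length xs}" for rs
    using that by (cases rs) (auto simp: F_def cut_def supp_def composable_concat_path_iff)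
  have "inj_on cut {..length xs}"
    by (rule inj_onI) (simp add: cut_def, metis length_take min.absorb2)
  have "path_mult f g (v, xs) = (\<Sum>rs\<in>supp f \<times> supp g. F rs)"
    unfolding path_mult_def F_def by (simp add: sum.cartesian_product)
  also have "\<dots> = (\<Sum>rs\<in>cut ` {..length xs}. F rs)"
    using assms F_zero by (intro sum.mono_neutral_cong) auto
  also have "\<dots> = (\<Sum>i\<le>length xs. F (cut i))"
    using \<open>inj_on cut {..length xs}\<close> by (rule sum.reindex[unfolded comp_def])
  also have "\<dots> = (\<Sum>i\<le>length xs. f (v, take i xs) * g (end_from v (take i xs), drop i xs))"
    by (rule sum.cong) (simp_all add: F_def cut_def composable_def concat_path_def path_end_def)
  finally show ?thesis .
qed

lemma path_mult_nonzeroE: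
  fixes f g :: "path \<Rightarrow> 'k::field"
  assumes "path_mult f g t \<noteq> 0"
  obtains r s where "r \<in> supp f" "s \<in> supp g" "composable r s" "concat_path r s = t"
proof -
  obtain r where r: "r \<in> supp f" and
    sum_r: "(\<Sum>s\<in>supp g. if composable r s \<and> concat_path r s = t then f r * g s else 0) \<noteq> 0"
    using assms unfolding path_mult_def by (rule sum.not_neutral_contains_not_neutral)
  obtain s where "s \<in> supp g"
    "(if composable r s \<and> concat_path r s = t then f r * g s else 0) \<noteq> 0"
    using sum_r by (rule sum.not_neutral_contains_not_neutral)
  with r that show ?thesis by (auto split: if_splits)
qed

lemma finite_supp_path_mult:
  fixes f g :: "path \<Rightarrow> 'k::field"
  assumes "finite (supp f)" "finite (supp g)"
  shows "finite (supp (path_mult f g))"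
proof (rule finite_subset)
  show "supp (path_mult f g) \<subseteq> (\<lambda>(r, s). concat_path r s) ` (supp f \<times> supp g)"
  proof
    fix t assume "t \<in> supp (path_mult f g)"
    then obtain r s where "r \<in> supp f" "s \<in> supp g" "concat_path r s = t"
      by (auto simp: supp_def elim: path_mult_nonzeroE)
    then show "t \<in> (\<lambda>(r, s). concat_path r s) ` (supp f \<times> supp g)"
      by (intro image_eqI[of _ _ "(r, s)"]) auto
  qed
qed (use assms in auto)

lemma valid_path_mult:
  fixes f g :: "path \<Rightarrow> 'k::field"
  assumes "\<forall>r. f r \<noteq> 0 \<longrightarrow> valid_path r" "\<forall>r. g r \<noteq> 0 \<longrightarrow> valid_path r"
    and "path_mult f g t \<noteq> 0"
  shows "valid_path t"
  using assms(3)
proof (rule path_mult_nonzeroE)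
  fix r s assume "r \<in> supp f" "s \<in> supp g" "composable r s" "concat_path r s = t"
  with assms(1,2) show "valid_path t"
    by (cases r; cases s)
      (auto simp: supp_def valid_path_def composable_def concat_path_def path_end_def)
qed

lemma path_mult_eq_sum_drop:
  fixes g h :: "path \<Rightarrow> 'k::field"
  assumes "finite (supp g)" "finite (supp h)" "i \<le> length xs"
  shows "path_mult g h (end_from v (take i xs), drop i xs) =
    (\<Sum>j=i..length xs. g (end_from v (take i xs), drop i (take j xs)) *
       h (end_from v (take j xs), drop j xs))"
proof -
  have take_add: "take (k + i) xs = take i xs @ take k (drop i xs)" for k
    by (metis add.commute take_add)
  have "path_mult g h (end_from v (take i xs), drop i xs) =
    (\<Sum>k=0..length xs - i. g (end_from v (take i xs), drop i (take (k + i) xs)) *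
       h (end_from v (take (k + i) xs), drop (k + i) xs))"
    unfolding path_mult_eq_sum[OF assms(1,2)] length_drop
  proof (intro sum.cong)
    fix k
    have "drop i (take (k + i) xs) = take k (drop i xs)" by (simp add: drop_take)
    moreover have "drop (k + i) xs = drop k (drop i xs)" by (simp add: add.commute)
    ultimately show "g (end_from v (take i xs), take k (drop i xs)) *
        h (end_from (end_from v (take i xs)) (take k (drop i xs)), drop k (drop i xs)) =
      g (end_from v (take i xs), drop i (take (k + i) xs)) *
        h (end_from v (take (k + i) xs), drop (k + i) xs)"
      by (simp only: take_add end_from_append)
  qed auto
  also have "\<dots> = (\<Sum>j=0 + i..length xs - i + i. g (end_from v (take i xs), drop i (take j xs)) *
       h (end_from v (take j xs), drop j xs))"
    by (rule sum.shift_bounds_cl_nat_ivl[symmetric])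
  finally show ?thesis using assms(3) by simp
qed

lemma path_mult_assoc:
  fixes f g h :: "path \<Rightarrow> 'k::field"
  assumes f: "finite (supp f)" and g: "finite (supp g)" and h: "finite (supp h)"
  shows "path_mult (path_mult f g) h = path_mult f (path_mult g h)"
proof
  fix r :: path
  obtain v xs where r: "r = (v, xs)" by (cases r)
  define n where "n = length xs"
  define G where "G = (\<lambda>i j. f (v, take i xs) * g (end_from v (take i xs), drop i (take j xs)) *
    h (end_from v (take j xs), drop j xs))"
  have "path_mult (path_mult f g) h (v, xs) =
      (\<Sum>j\<le>n. path_mult f g (v, take j xs) * h (end_from v (take j xs), drop j xs))"
    unfolding n_def by (rule path_mult_eq_sum[OF finite_supp_path_mult[OF f g] h])
  also have "\<dots> = (\<Sum>j\<le>n. \<Sum>i\<le>j. G i j)"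
    by (intro sum.cong refl)
      (simp add: path_mult_eq_sum[OF f g] sum_distrib_right G_def n_def min_def)
  also have "\<dots> = (\<Sum>i\<le>n. \<Sum>j=i..n. G i j)"
    by (rule sum_triangle_swap)
  also have "\<dots> = (\<Sum>i\<le>n. f (v, take i xs) * path_mult g h (end_from v (take i xs), drop i xs))"
    by (intro sum.cong refl)
      (simp add: path_mult_eq_sum_drop[OF g h] sum_distrib_left G_def n_def mult.assoc)
  also have "\<dots> = path_mult f (path_mult g h) (v, xs)"
    unfolding n_def by (rule path_mult_eq_sum[OF f finite_supp_path_mult[OF g h], symmetric])
  finally show "path_mult (path_mult f g) h r = path_mult f (path_mult g h) r"
    by (simp add: r)
qed

lemma carrier_path_algebra:
  "f \<in> carrier (path_algebra :: (path \<Rightarrow> 'k::field) ring) \<longleftrightarrow>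
    finite (supp f) \<and> (\<forall>r. f r \<noteq> 0 \<longrightarrow> valid_path r)"
  by (simp add: path_algebra_def)

lemma path_algebra_simps:
  "mult (path_algebra :: (path \<Rightarrow> 'k::field) ring) = path_mult"
  "add (path_algebra :: (path \<Rightarrow> 'k::field) ring) = (\<lambda>f g r. f r + g r)"
  "zero (path_algebra :: (path \<Rightarrow> 'k::field) ring) = (\<lambda>r. 0)"
  "one (path_algebra :: (path \<Rightarrow> 'k::field) ring) = (\<lambda>r. if snd r = [] then 1 else 0)"
  by (auto simp: path_algebra_def fun_eq_iff) (metis vert.exhaust)

lemma supp_zero [simp]: "supp (\<lambda>r. 0) = {}"
  by (simp add: supp_def)

lemma finite_supp_path_one: "finite (supp (\<lambda>r::path. if snd r = [] then 1 else (0::'k::field)))"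
proof (rule finite_subset)
  show "supp (\<lambda>r::path. if snd r = [] then 1 else (0::'k)) \<subseteq> {(E1, []), (E2, [])}"
    by (auto simp: supp_def) (metis vert.exhaust)
qed simp

lemma finite_supp_add:
  fixes f g :: "path \<Rightarrow> 'k::field"
  shows "finite (supp f) \<Longrightarrow> finite (supp g) \<Longrightarrow> finite (supp (\<lambda>r. f r + g r))"
  by (rule finite_subset[of _ "supp f \<union> supp g"]) (auto simp: supp_def)

lemma path_mult_one_left:
  fixes f :: "path \<Rightarrow> 'k::field"
  assumes "finite (supp f)"
  shows "path_mult (\<lambda>r. if snd r = [] then 1 else 0) f = f"
proof
  fix r :: path
  obtain v xs where r: "r = (v, xs)" by (cases r)
  show "path_mult (\<lambda>r. if snd r = [] then 1 else 0) f r = f r"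
    unfolding r path_mult_eq_sum[OF finite_supp_path_one assms]
    by (cases xs) (simp_all add: sum.atMost_Suc_shift del: sum.atMost_Suc)
qed

lemma path_mult_one_right:
  fixes f :: "path \<Rightarrow> 'k::field"
  assumes "finite (supp f)"
  shows "path_mult f (\<lambda>r. if snd r = [] then 1 else 0) = f"
proof
  fix r :: path
  obtain v xs where r: "r = (v, xs)" by (cases r)
  have "path_mult f (\<lambda>r. if snd r = [] then 1 else 0) (v, xs) =
      (\<Sum>i\<in>{length xs}. f (v, take i xs) * (if drop i xs = [] then 1 else 0))"
    unfolding path_mult_eq_sum[OF assms finite_supp_path_one] snd_conv
    by (intro sum.mono_neutral_right) auto
  then show "path_mult f (\<lambda>r. if snd r = [] then 1 else 0) r = f r"
    by (simp add: r)
qed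

lemma path_mult_add_left:
  fixes f g h :: "path \<Rightarrow> 'k::field"
  assumes "finite (supp f)" "finite (supp g)" "finite (supp h)"
  shows "path_mult (\<lambda>r. f r + g r) h = (\<lambda>r. path_mult f h r + path_mult g h r)"
proof
  fix r :: path
  show "path_mult (\<lambda>r. f r + g r) h r = path_mult f h r + path_mult g h r"
    by (cases r) (simp add: path_mult_eq_sum finite_supp_add assms sum.distrib distrib_right)
qed

lemma path_mult_add_right:
  fixes f g h :: "path \<Rightarrow> 'k::field"
  assumes "finite (supp f)" "finite (supp g)" "finite (supp h)"
  shows "path_mult h (\<lambda>r. f r + g r) = (\<lambda>r. path_mult h f r + path_mult h g r)"
proof
  fix r :: path
  show "path_mult h (\<lambda>r. f r + g r) r = path_mult h f r + path_mult h g r"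
    by (cases r) (simp add: path_mult_eq_sum finite_supp_add assms sum.distrib distrib_left)
qed

lemma ring_path_algebra: "ring (path_algebra :: (path \<Rightarrow> 'k::field) ring)"
proof (rule ringI)
  show "abelian_group (path_algebra :: (path \<Rightarrow> 'k) ring)"
  proof (rule abelian_groupI)
    fix f g :: "path \<Rightarrow> 'k"
    assume "f \<in> carrier path_algebra" "g \<in> carrier path_algebra"
    then show "f \<oplus>\<^bsub>path_algebra\<^esub> g \<in> carrier path_algebra"
      unfolding carrier_path_algebra path_algebra_simps
      by (auto simp: finite_supp_add) (metis add.right_neutral)
  next
    fix f :: "path \<Rightarrow> 'k"
    assume "f \<in> carrier path_algebra"
    then show "\<exists>g\<in>carrier path_algebra. g \<oplus>\<^bsub>path_algebra\<^esub> f = \<zero>\<^bsub>path_algebra\<^esub>"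
      by (intro bexI[of _ "\<lambda>r. - f r"])
        (auto simp: supp_def carrier_path_algebra path_algebra_simps)
  qed (auto simp: carrier_path_algebra path_algebra_simps add.assoc add.commute)
  show "monoid (path_algebra :: (path \<Rightarrow> 'k) ring)"
  proof (rule monoidI)
    show "\<one>\<^bsub>path_algebra\<^esub> \<in> carrier (path_algebra :: (path \<Rightarrow> 'k) ring)"
      by (simp add: carrier_path_algebra path_algebra_simps finite_supp_path_one valid_path_def)
    fix f g h :: "path \<Rightarrow> 'k"
    assume f: "f \<in> carrier path_algebra" and g: "g \<in> carrier path_algebra"
      and h: "h \<in> carrier path_algebra"
    show "f \<otimes>\<^bsub>path_algebra\<^esub> g \<in> carrier path_algebra"
      using f g unfolding carrier_path_algebra path_algebra_simps
      by (blast intro: finite_supp_path_mult valid_path_mult)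
    show "f \<otimes>\<^bsub>path_algebra\<^esub> g \<otimes>\<^bsub>path_algebra\<^esub> h = f \<otimes>\<^bsub>path_algebra\<^esub> (g \<otimes>\<^bsub>path_algebra\<^esub> h)"
      using f g h unfolding carrier_path_algebra path_algebra_simps
      by (intro path_mult_assoc) auto
    show "\<one>\<^bsub>path_algebra\<^esub> \<otimes>\<^bsub>path_algebra\<^esub> f = f" "f \<otimes>\<^bsub>path_algebra\<^esub> \<one>\<^bsub>path_algebra\<^esub> = f"
      using f unfolding carrier_path_algebra path_algebra_simps
      by (auto intro: path_mult_one_left path_mult_one_right)
  qed
next
  fix f g h :: "path \<Rightarrow> 'k"
  assume "f \<in> carrier path_algebra" "g \<in> carrier path_algebra" "h \<in> carrier path_algebra"
  then show "(f \<oplus>\<^bsub>path_algebra\<^esub> g) \<otimes>\<^bsub>path_algebra\<^esub> h =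
      f \<otimes>\<^bsub>path_algebra\<^esub> h \<oplus>\<^bsub>path_algebra\<^esub> g \<otimes>\<^bsub>path_algebra\<^esub> h"
    "h \<otimes>\<^bsub>path_algebra\<^esub> (f \<oplus>\<^bsub>path_algebra\<^esub> g) =
      h \<otimes>\<^bsub>path_algebra\<^esub> f \<oplus>\<^bsub>path_algebra\<^esub> h \<otimes>\<^bsub>path_algebra\<^esub> g"
    unfolding carrier_path_algebra path_algebra_simps
    by (auto intro: path_mult_add_left path_mult_add_right)
qed

lemma path_algebra_minus:
  assumes "f \<in> carrier (path_algebra :: (path \<Rightarrow> 'k::field) ring)"
  shows "\<ominus>\<^bsub>path_algebra\<^esub> f = (\<lambda>r. - f r)"
proof (rule abelian_group.minus_equality[OF ring.is_abelian_group[OF ring_path_algebra] _ assms])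
  show "(\<lambda>r. - f r) \<in> carrier (path_algebra :: (path \<Rightarrow> 'k) ring)"
    using assms by (auto simp: carrier_path_algebra supp_def)
qed (simp add: path_algebra_simps)

lemma path_algebra_diff:
  "f \<in> carrier (path_algebra :: (path \<Rightarrow> 'k::field) ring) \<Longrightarrow> g \<in> carrier path_algebra \<Longrightarrow>
    f \<ominus>\<^bsub>path_algebra\<^esub> g = (\<lambda>r. f r - g r)"
  by (simp add: a_minus_def path_algebra_minus path_algebra_simps)

lemma path_mult_Nil:
  fixes f g :: "path \<Rightarrow> 'k::field"
  assumes "finite (supp f)" "finite (supp g)"
  shows "path_mult f g (v, []) = f (v, []) * g (v, [])"
  using path_mult_eq_sum[OF assms, of v "[]"] by simp

lemma path_mult_single:
  fixes f g :: "path \<Rightarrow> 'k::field"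
  assumes "finite (supp f)" "finite (supp g)"
  shows "path_mult f g (v, [y]) = f (v, []) * g (v, [y]) + f (v, [y]) * g (tgt y, [])"
  using path_mult_eq_sum[OF assms, of v "[y]"] by simp

lemma path_mult_pair:
  fixes f g :: "path \<Rightarrow> 'k::field"
  assumes "finite (supp f)" "finite (supp g)"
  shows "path_mult f g (v, [y, z]) =
    f (v, []) * g (v, [y, z]) + f (v, [y]) * g (tgt y, [z]) + f (v, [y, z]) * g (tgt z, [])"
  using path_mult_eq_sum[OF assms, of v "[y, z]"] by (simp add: numeral_2_eq_2)

lemma supp_bpath [simp]: "supp (bpath r :: path \<Rightarrow> 'k::field) = {r}"
  by (auto simp: supp_def bpath_def)

lemma bpath_carrier: "valid_path r \<Longrightarrow> (bpath r :: path \<Rightarrow> 'k::field) \<in> carrier path_algebra"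
  unfolding carrier_path_algebra supp_bpath by (simp add: bpath_def)

lemma path_mult_bpath:
  "path_mult (bpath r) (bpath s :: path \<Rightarrow> 'k::field) =
    (if composable r s then bpath (concat_path r s) else (\<lambda>t. 0))"
  unfolding path_mult_def supp_bpath by (rule ext) (auto simp: bpath_def)

lemma scal_carrier:
  "f \<in> carrier path_algebra \<Longrightarrow> scal c f \<in> carrier (path_algebra :: (path \<Rightarrow> 'k::field) ring)"
  by (auto simp: carrier_path_algebra scal_def supp_def intro: finite_subset[of _ "supp f"])

lemma path_mult_scal_left:
  fixes f g :: "path \<Rightarrow> 'k::field"
  assumes "finite (supp f)" "finite (supp g)"
  shows "path_mult (scal c f) g = scal c (path_mult f g)"
proof
  fix r :: path
  have "finite (supp (scal c f))"
    using assms(1) by (rule finite_subset[rotated]) (auto simp: supp_def scal_def)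
  then show "path_mult (scal c f) g r = scal c (path_mult f g) r"
    by (cases r) (simp add: path_mult_eq_sum assms scal_def sum_distrib_left mult.assoc)
qed

lemma scal_one_mult:
  "f \<in> carrier path_algebra \<Longrightarrow>
    scal c \<one>\<^bsub>path_algebra\<^esub> \<otimes>\<^bsub>path_algebra\<^esub> f = scal c (f :: path \<Rightarrow> 'k::field)"
  by (simp add: carrier_path_algebra path_algebra_simps path_mult_scal_left finite_supp_path_one
      path_mult_one_left)

definition vtx :: "vert \<Rightarrow> path \<Rightarrow> 'k::field" where "vtx v = bpath (v, [])"
definition arw :: "arr \<Rightarrow> path \<Rightarrow> 'k::field" where "arw x = bpath (src x, [x])"

lemma vtx_carrier: "(vtx v :: path \<Rightarrow> 'k::field) \<in> carrier path_algebra"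
  unfolding vtx_def by (rule bpath_carrier) (simp add: valid_path_def)

lemma arw_carrier: "(arw x :: path \<Rightarrow> 'k::field) \<in> carrier path_algebra"
  unfolding arw_def by (rule bpath_carrier) (simp add: valid_path_def)

lemma vtx_mult_arw: "vtx (src x) \<otimes>\<^bsub>path_algebra\<^esub> arw x = (arw x :: path \<Rightarrow> 'k::field)"
  by (simp add: vtx_def arw_def path_algebra_simps path_mult_bpath composable_def path_end_def
      concat_path_def)

lemma arw_mult_vtx: "arw x \<otimes>\<^bsub>path_algebra\<^esub> vtx (tgt x) = (arw x :: path \<Rightarrow> 'k::field)"
  by (simp add: vtx_def arw_def path_algebra_simps path_mult_bpath composable_def path_end_def
      concat_path_def)

lemma vtx_orthogonal: "vtx E1 \<otimes>\<^bsub>path_algebra\<^esub> vtx E2 = (\<zero>\<^bsub>path_algebra\<^esub> :: path \<Rightarrow> 'k::field)"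
  by (simp add: vtx_def path_algebra_simps path_mult_bpath composable_def path_end_def)

lemma vtx_sum: "vtx E1 \<oplus>\<^bsub>path_algebra\<^esub> vtx E2 = (\<one>\<^bsub>path_algebra\<^esub> :: path \<Rightarrow> 'k::field)"
  by (rule ext) (auto simp: vtx_def bpath_def path_algebra_simps, metis vert.exhaust)

lemma bpath_Cons:
  assumes "valid_path (v, y # ys)"
  shows "bpath (v, y # ys) = arw y \<otimes>\<^bsub>path_algebra\<^esub> (bpath (tgt y, ys) :: path \<Rightarrow> 'k::field)"
  using assms
  by (simp add: arw_def path_algebra_simps path_mult_bpath composable_def path_end_def
      concat_path_def valid_path_def)

lemma valid_path_Cons_tail: "valid_path (v, y # ys) \<Longrightarrow> valid_path (tgt y, ys)"
  by (simp add: valid_path_def)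

section \<open>The algebras \<open>A(q)\<close>\<close>

text \<open>The six linear forms \<open>deg2_coords p\<close> on the eight paths of length two cut out the
  span of the relations of \<open>A(p)\<close>; so \<open>rel_hull p\<close> consists of the
  elements whose components of length at most one vanish and whose length-two component lies
  in that span.\<close>

definition deg2_coords :: "'k::field \<Rightarrow> (path \<Rightarrow> 'k) \<Rightarrow> 'k \<times> 'k \<times> 'k \<times> 'k \<times> 'k \<times> 'k" where
  "deg2_coords p f =
    (f (E1, [Arr_a, Arr_b]) + f (E1, [Arr_c, Arr_d]),
     f (E1, [Arr_a, Arr_d]), f (E1, [Arr_c, Arr_b]),
     p * f (E2, [Arr_b, Arr_a]) + f (E2, [Arr_d, Arr_c]),
     f (E2, [Arr_b, Arr_c]), f (E2, [Arr_d, Arr_a]))"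

definition rel_hull :: "'k::field \<Rightarrow> (path \<Rightarrow> 'k) set" where
  "rel_hull p = {f \<in> carrier path_algebra. (\<forall>v. f (v, []) = 0) \<and> (\<forall>v y. f (v, [y]) = 0) \<and>
     deg2_coords p f = (0, 0, 0, 0, 0, 0)}"

lemma rel_hull_mult:
  fixes f h :: "path \<Rightarrow> 'k::field"
  assumes f: "f \<in> carrier path_algebra" and h: "h \<in> rel_hull p"
  shows "path_mult f h \<in> rel_hull p" "path_mult h f \<in> rel_hull p"
proof -
  have fin: "finite (supp f)" "finite (supp h)"
    using f h by (auto simp: rel_hull_def carrier_path_algebra)
  have closed: "path_mult f h \<in> carrier path_algebra" "path_mult h f \<in> carrier path_algebra"
    using f h ring.ring_simprules(5)[OF ring_path_algebra]
    by (auto simp: rel_hull_def path_algebra_simps)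
  have h_low: "h (v, []) = 0" "h (v, [y]) = 0" for v y
    using h by (auto simp: rel_hull_def)
  have h_deg2: "h (E1, [Arr_a, Arr_b]) + h (E1, [Arr_c, Arr_d]) = 0"
    "h (E1, [Arr_a, Arr_d]) = 0" "h (E1, [Arr_c, Arr_b]) = 0"
    "p * h (E2, [Arr_b, Arr_a]) + h (E2, [Arr_d, Arr_c]) = 0"
    "h (E2, [Arr_b, Arr_c]) = 0" "h (E2, [Arr_d, Arr_a]) = 0"
    using h by (auto simp: rel_hull_def deg2_coords_def)
  have "deg2_coords p (path_mult f h) = (0, 0, 0, 0, 0, 0)"
    using h_deg2 by (simp add: deg2_coords_def path_mult_pair[OF fin] h_low
        mult.left_commute[of p] flip: distrib_left)
  moreover have "deg2_coords p (path_mult h f) = (0, 0, 0, 0, 0, 0)"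
    using h_deg2 by (simp add: deg2_coords_def path_mult_pair[OF fin(2,1)] h_low
        flip: mult.assoc distrib_right)
  ultimately show "path_mult f h \<in> rel_hull p" "path_mult h f \<in> rel_hull p"
    using closed by (simp_all add: rel_hull_def h_low path_mult_Nil path_mult_single fin)
qed

lemma ideal_rel_hull: "ideal (rel_hull p) (path_algebra :: (path \<Rightarrow> 'k::field) ring)"
proof (rule idealI[OF ring_path_algebra])
  interpret R: ring "path_algebra :: (path \<Rightarrow> 'k) ring" by (rule ring_path_algebra)
  show "subgroup (rel_hull p) (add_monoid (path_algebra :: (path \<Rightarrow> 'k) ring))"
  proof (rule group.subgroupI[OF R.a_group])
    show "rel_hull p \<subseteq> carrier (add_monoid (path_algebra :: (path \<Rightarrow> 'k) ring))"
      by (auto simp: rel_hull_def)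
    have "\<zero>\<^bsub>path_algebra\<^esub> \<in> rel_hull p"
      using R.zero_closed by (simp add: rel_hull_def deg2_coords_def path_algebra_simps)
    then show "rel_hull p \<noteq> {}" by blast
  next
    fix f assume f: "f \<in> rel_hull p"
    have "inv\<^bsub>add_monoid path_algebra\<^esub> f = \<ominus>\<^bsub>path_algebra\<^esub> f"
      by (simp only: a_inv_def)
    also have "\<dots> = (\<lambda>r. - f r)"
      using f by (simp add: rel_hull_def path_algebra_minus)
    finally have "inv\<^bsub>add_monoid path_algebra\<^esub> f = (\<lambda>r. - f r)" .
    moreover have "(\<lambda>r. - f r) \<in> carrier path_algebra"
      using f R.a_inv_closed[of f] by (simp add: rel_hull_def path_algebra_minus)
    ultimately show "inv\<^bsub>add_monoid path_algebra\<^esub> f \<in> rel_hull p"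
      using f
      by (auto simp: rel_hull_def deg2_coords_def neg_eq_iff_add_eq_0)
  next
    fix f g assume "f \<in> rel_hull p" "g \<in> rel_hull p"
    then show "f \<otimes>\<^bsub>add_monoid path_algebra\<^esub> g \<in> rel_hull p"
      using R.a_closed[of f g]
      by (auto simp: rel_hull_def deg2_coords_def path_algebra_simps algebra_simps)
  qed
qed (auto simp: rel_hull_mult path_algebra_simps)

lemma rel1_carrier: "(rel1 :: path \<Rightarrow> 'k::field) \<in> carrier path_algebra"
proof -
  have "supp (rel1 :: path \<Rightarrow> 'k) \<subseteq> {(E1, [Arr_a, Arr_b]), (E1, [Arr_c, Arr_d])}"
    by (auto simp: supp_def rel1_def bpath_def split: if_splits)
  then show ?thesis
    by (auto simp: carrier_path_algebra rel1_def bpath_def valid_path_def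
        intro: finite_subset split: if_splits)
qed

lemma rel2_carrier: "(rel2 p :: path \<Rightarrow> 'k::field) \<in> carrier path_algebra"
proof -
  have "supp (rel2 p :: path \<Rightarrow> 'k) \<subseteq> {(E2, [Arr_b, Arr_a]), (E2, [Arr_d, Arr_c])}"
    by (auto simp: supp_def rel2_def bpath_def split: if_splits)
  then show ?thesis
    by (auto simp: carrier_path_algebra rel2_def bpath_def valid_path_def
        intro: finite_subset split: if_splits)
qed

lemma ideal_rel_ideal: "ideal (rel_ideal p) (path_algebra :: (path \<Rightarrow> 'k::field) ring)"
  unfolding rel_ideal_def
  by (rule ring.genideal_ideal[OF ring_path_algebra]) (simp add: rel1_carrier rel2_carrier)

lemma rels_in_rel_ideal:
  "(rel1 :: path \<Rightarrow> 'k::field) \<in> rel_ideal p" "(rel2 p :: path \<Rightarrow> 'k::field) \<in> rel_ideal p"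
  unfolding rel_ideal_def
  using ring.genideal_self[OF ring_path_algebra, of "{rel1, rel2 p}"] rel1_carrier rel2_carrier
  by auto

lemma rel_ideal_subset_rel_hull: "rel_ideal p \<subseteq> (rel_hull p :: (path \<Rightarrow> 'k::field) set)"
  unfolding rel_ideal_def
proof (rule ring.genideal_minimal[OF ring_path_algebra ideal_rel_hull])
  show "{rel1, rel2 p} \<subseteq> (rel_hull p :: (path \<Rightarrow> 'k) set)"
    using rel1_carrier rel2_carrier[of p]
    by (auto simp: rel_hull_def deg2_coords_def rel1_def rel2_def bpath_def)
qed

abbreviation cls :: "'k::field \<Rightarrow> (path \<Rightarrow> 'k) \<Rightarrow> (path \<Rightarrow> 'k) set" where
  "cls p f \<equiv> rel_ideal p +>\<^bsub>path_algebra\<^esub> f"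

definition rep :: "(path \<Rightarrow> 'k::field) set \<Rightarrow> path \<Rightarrow> 'k" where
  "rep X = (SOME f. f \<in> X)"

lemma ring_A_alg: "ring (A_alg (p :: 'k::field))"
  unfolding A_alg_def by (rule ideal.quotient_is_ring[OF ideal_rel_ideal])

lemma cls_ring_hom: "cls p \<in> ring_hom path_algebra (A_alg (p :: 'k::field))"
  unfolding A_alg_def by (rule ideal.rcos_ring_hom[OF ideal_rel_ideal])

lemma carrier_A_alg: "carrier (A_alg (p :: 'k::field)) = cls p ` carrier path_algebra"
  by (auto simp: A_alg_def FactRing_def A_RCOSETS_def RCOSETS_def a_r_coset_def)

lemma cls_closed: "f \<in> carrier path_algebra \<Longrightarrow> cls (p :: 'k::field) f \<in> carrier (A_alg p)"
  by (simp add: carrier_A_alg)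

lemma cls_mult:
  "f \<in> carrier path_algebra \<Longrightarrow> g \<in> carrier path_algebra \<Longrightarrow>
    cls p f \<otimes>\<^bsub>A_alg (p :: 'k::field)\<^esub> cls p g = cls p (f \<otimes>\<^bsub>path_algebra\<^esub> g)"
  using ring_hom_mult[OF cls_ring_hom] by (rule sym)

lemma cls_add:
  "f \<in> carrier path_algebra \<Longrightarrow> g \<in> carrier path_algebra \<Longrightarrow>
    cls p f \<oplus>\<^bsub>A_alg (p :: 'k::field)\<^esub> cls p g = cls p (f \<oplus>\<^bsub>path_algebra\<^esub> g)"
  using ring_hom_add[OF cls_ring_hom] by (rule sym)

lemma one_A_alg: "\<one>\<^bsub>A_alg (p :: 'k::field)\<^esub> = cls p \<one>\<^bsub>path_algebra\<^esub>"
  using ring_hom_one[OF cls_ring_hom] by (rule sym)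

lemma zero_A_alg: "\<zero>\<^bsub>A_alg (p :: 'k::field)\<^esub> = cls p \<zero>\<^bsub>path_algebra\<^esub>"
  using ring_hom_zero[OF cls_ring_hom ring_path_algebra ring_A_alg] by (rule sym)

lemma cls_eq_iff:
  assumes "f \<in> carrier path_algebra" "g \<in> carrier path_algebra"
  shows "cls (p :: 'k::field) f = cls p g \<longleftrightarrow> (\<lambda>r. f r - g r) \<in> rel_ideal p"
proof -
  interpret I: ideal "rel_ideal p" "path_algebra :: (path \<Rightarrow> 'k) ring" by (rule ideal_rel_ideal)
  have "cls p f = cls p g \<longleftrightarrow> f \<in> cls p g"
    using I.a_repr_independence'[of f g] I.a_repr_independenceD[of f g] assms by metis
  also have "\<dots> \<longleftrightarrow> f \<ominus>\<^bsub>path_algebra\<^esub> g \<in> rel_ideal p"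
    using assms by (intro I.a_rcos_module_minus[OF ring_path_algebra])
  finally show ?thesis by (simp add: path_algebra_diff assms)
qed

lemma rep_cls:
  assumes "f \<in> carrier path_algebra"
  shows "rep (cls (p :: 'k::field) f) \<in> carrier path_algebra" "cls p (rep (cls p f)) = cls p f"
proof -
  interpret I: ideal "rel_ideal p" "path_algebra :: (path \<Rightarrow> 'k) ring" by (rule ideal_rel_ideal)
  have "rep (cls p f) \<in> cls p f"
    unfolding rep_def using I.a_rcos_self[OF assms] by (rule someI[where P = "\<lambda>g. g \<in> cls p f"])
  then show "rep (cls p f) \<in> carrier path_algebra" "cls p (rep (cls p f)) = cls p f"
    using I.a_repr_independence'[OF _ assms] I.a_r_coset_subset_G[OF I.a_subset assms] by auto
qed

lemma rep_closed: "X \<in> carrier (A_alg (p :: 'k::field)) \<Longrightarrow> rep X \<in> carrier path_algebra"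
  by (auto simp: carrier_A_alg rep_cls)

lemma cls_rep: "X \<in> carrier (A_alg (p :: 'k::field)) \<Longrightarrow> cls p (rep X) = X"
  by (auto simp: carrier_A_alg rep_cls)

text \<open>The relations are homogeneous of degree two, so the components of length at most
  one and the coordinates \<^const>\<open>deg2_coords\<close> do not depend on the representative.\<close>

lemma cls_eq_imp_low_eq:
  assumes "f \<in> carrier path_algebra" "g \<in> carrier path_algebra" "cls (p :: 'k::field) f = cls p g"
    and "length ys \<le> 1"
  shows "f (v, ys) = g (v, ys)"
proof -
  have "(\<lambda>r. f r - g r) \<in> rel_hull p"
    using assms(3) cls_eq_iff[OF assms(1,2)] rel_ideal_subset_rel_hull by blast
  with assms(4) show ?thesis
    by (cases ys) (auto simp: rel_hull_def)
qed

lemma cls_eq_imp_deg2_coords_eq: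
  assumes "f \<in> carrier path_algebra" "g \<in> carrier path_algebra" "cls (p :: 'k::field) f = cls p g"
  shows "deg2_coords p f = deg2_coords p g"
proof -
  have "(\<lambda>r. f r - g r) \<in> rel_hull p"
    using assms(3) cls_eq_iff[OF assms(1,2)] rel_ideal_subset_rel_hull by blast
  then show ?thesis by (simp add: rel_hull_def deg2_coords_def algebra_simps)
qed

lemma rep_cls_low:
  "f \<in> carrier path_algebra \<Longrightarrow> length ys \<le> 1 \<Longrightarrow> rep (cls (p :: 'k::field) f) (v, ys) = f (v, ys)"
  using cls_eq_imp_low_eq[OF rep_cls(1)] rep_cls(2) by blast

lemma A_scalar_closed: "A_scalar p c \<in> carrier (A_alg (p :: 'k::field))"
  unfolding A_scalar_def
  by (rule cls_closed[OF scal_carrier[OF ring.ring_simprules(6)[OF ring_path_algebra]]])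

lemma A_scalar_mult_cls:
  "f \<in> carrier path_algebra \<Longrightarrow> A_scalar p c \<otimes>\<^bsub>A_alg p\<^esub> cls p f = cls (p :: 'k::field) (scal c f)"
  unfolding A_scalar_def
  by (simp add: cls_mult scal_carrier ring.ring_simprules(6)[OF ring_path_algebra] scal_one_mult)

lemma linear_functional_A_alg_expansion:
  fixes L :: "(path \<Rightarrow> 'k::field) set \<Rightarrow> 'k"
  assumes add: "\<And>X Y. X \<in> carrier (A_alg q) \<Longrightarrow> Y \<in> carrier (A_alg q) \<Longrightarrow>
      L (X \<oplus>\<^bsub>A_alg q\<^esub> Y) = L X + L Y"
    and scalar: "\<And>c X. X \<in> carrier (A_alg q) \<Longrightarrow> L (A_scalar q c \<otimes>\<^bsub>A_alg q\<^esub> X) = c * L X"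
    and f: "f \<in> carrier path_algebra"
  shows "L (cls q f) = (\<Sum>r\<in>supp f. f r * L (cls q (bpath r)))"
proof -
  have "L (cls q g) = (\<Sum>r\<in>S. g r * L (cls q (bpath r)))"
    if "finite S" "g \<in> carrier path_algebra" "supp g = S" for S g
    using that(1) that(2-)
  proof (induction S arbitrary: g rule: finite_induct)
    case empty
    have "L \<zero>\<^bsub>A_alg q\<^esub> + L \<zero>\<^bsub>A_alg q\<^esub> = L \<zero>\<^bsub>A_alg q\<^esub>"
      using add ring.ring_simprules(2,15)[OF ring_A_alg] by metis
    then have "L \<zero>\<^bsub>A_alg q\<^esub> = 0" by (simp only: add_cancel_left_right)
    moreover have "g = \<zero>\<^bsub>path_algebra\<^esub>"
      using empty.prems(2) by (auto simp: supp_def path_algebra_simps)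
    ultimately show ?case by (simp add: zero_A_alg)
  next
    case (insert s S)
    define g' where "g' = g(s := 0)"
    have "g s \<noteq> 0" using insert.prems(2) by (auto simp: supp_def)
    then have s: "bpath s \<in> carrier path_algebra"
      using insert.prems(1) by (intro bpath_carrier) (cases s, auto simp: carrier_path_algebra)
    have supp_g': "supp g' = S" using insert by (auto simp: supp_def g'_def)
    have g': "g' \<in> carrier path_algebra"
      using insert supp_g' by (auto simp: carrier_path_algebra g'_def)
    have "g = g' \<oplus>\<^bsub>path_algebra\<^esub> scal (g s) (bpath s)"
      by (rule ext) (auto simp: g'_def scal_def bpath_def path_algebra_simps)
    then have "cls q g = cls q g' \<oplus>\<^bsub>A_alg q\<^esub> (A_scalar q (g s) \<otimes>\<^bsub>A_alg q\<^esub> cls q (bpath s))"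
      by (simp add: A_scalar_mult_cls[OF s] cls_add g' scal_carrier[OF s])
    then have "L (cls q g) = L (cls q g') + L (A_scalar q (g s) \<otimes>\<^bsub>A_alg q\<^esub> cls q (bpath s))"
      using add[OF cls_closed[OF g'] ring.ring_simprules(5)[OF ring_A_alg A_scalar_closed
          cls_closed[OF s]]] by simp
    also have "L (A_scalar q (g s) \<otimes>\<^bsub>A_alg q\<^esub> cls q (bpath s)) = g s * L (cls q (bpath s))"
      by (rule scalar[OF cls_closed[OF s]])
    also have "L (cls q g') = (\<Sum>r\<in>S. g r * L (cls q (bpath r)))"
      unfolding insert.IH[OF g' supp_g'] using insert.hyps by (intro sum.cong) (auto simp: g'_def)
    finally show ?case
      using insert.hyps by (simp add: add.commute)
  qed
  then show ?thesis using f by (simp add: carrier_path_algebra)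
qed

lemma cls_arw_mult:
  "tgt x = src y \<Longrightarrow>
    cls q (arw x) \<otimes>\<^bsub>A_alg q\<^esub> cls q (arw y) = cls (q::'k::field) (bpath (src x, [x, y]))"
  unfolding cls_mult[OF arw_carrier arw_carrier]
  by (simp add: arw_def path_algebra_simps path_mult_bpath composable_def path_end_def
      concat_path_def)

lemma cls_rel:
  assumes "valid_path r" "valid_path s" "(\<lambda>t. bpath r t - c * bpath s t) \<in> rel_ideal q"
  shows "cls q (bpath r) = A_scalar q c \<otimes>\<^bsub>A_alg q\<^esub> cls (q::'k::field) (bpath s)"
proof -
  have "cls q (bpath r) = cls q (scal c (bpath s))"
    using assms cls_eq_iff[OF bpath_carrier[OF assms(1)] scal_carrier[OF bpath_carrier[OF assms(2)],
        where c = c], where p = q]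
    by (simp add: scal_def)
  then show ?thesis by (simp add: A_scalar_mult_cls bpath_carrier assms)
qed

lemma A_alg_rel1:
  "cls q (arw Arr_a) \<otimes>\<^bsub>A_alg q\<^esub> cls q (arw Arr_b) =
    A_scalar q 1 \<otimes>\<^bsub>A_alg q\<^esub> (cls q (arw Arr_c) \<otimes>\<^bsub>A_alg q\<^esub> cls (q::'k::field) (arw Arr_d))"
  using rels_in_rel_ideal(1)[of q]
  by (simp add: cls_arw_mult cls_rel valid_path_def rel1_def)

lemma A_alg_rel2:
  "cls q (arw Arr_b) \<otimes>\<^bsub>A_alg q\<^esub> cls q (arw Arr_a) =
    A_scalar q q \<otimes>\<^bsub>A_alg q\<^esub> (cls q (arw Arr_d) \<otimes>\<^bsub>A_alg q\<^esub> cls (q::'k::field) (arw Arr_c))"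
  using rels_in_rel_ideal(2)[of q]
  by (simp add: cls_arw_mult cls_rel valid_path_def rel2_def)

section \<open>Isomorphisms \<open>A(q) \<cong> A(p)\<close>\<close>

lemma det2_neq_zeroI:
  fixes m11 m12 m21 m22 :: "'k::field"
  assumes "\<And>u1 u2. u1 * m11 + u2 * m21 = 0 \<Longrightarrow> u1 * m12 + u2 * m22 = 0 \<Longrightarrow> u1 = 0 \<and> u2 = 0"
  shows "m11 * m22 - m12 * m21 \<noteq> 0"
proof
  assume "m11 * m22 - m12 * m21 = 0"
  then have "m21 = 0 \<and> m11 = 0" "m22 = 0 \<and> m12 = 0"
    using assms[of m21 "- m11"] assms[of m22 "- m12"] by (simp_all add: algebra_simps)
  then show False using assms[of 1 0] by simp
qed

text \<open>With \<open>M = (m\<^sub>i\<^sub>j)\<close> and \<open>N = (n\<^sub>i\<^sub>j)\<close> the matrices by which an isomorphism acts on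
  \<open>(a, c)\<close> and \<open>(b, d)\<close> modulo longer paths, the hypotheses say that the images of the two
  relations of \<open>A(q)\<close> lie in the span of the relations of \<open>A(p)\<close>. Writing
  \<open>x = m\<^sub>1\<^sub>1 n\<^sub>1\<^sub>1 - m\<^sub>2\<^sub>1 n\<^sub>2\<^sub>1\<close> and \<open>y = n\<^sub>1\<^sub>1 m\<^sub>1\<^sub>1 - q n\<^sub>2\<^sub>1 m\<^sub>2\<^sub>1\<close>, one finds
  \<open>x\<^sup>2 = det M det N \<noteq> 0\<close>, \<open>x (1 + q) = y (1 + p)\<close> and \<open>q x\<^sup>2 = p y\<^sup>2\<close>; eliminating \<open>y\<close>
  gives \<open>(p - q)(p q - 1) = 0\<close>.\<close>

lemma relation_coeffs_imp_eq_or_inverse: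
  fixes p q m11 m12 m21 m22 n11 n12 n21 n22 :: "'k::field"
  assumes e1: "m11 * n11 + m12 * n12 = m21 * n21 + m22 * n22"
    and e2: "m11 * n12 = m21 * n22" and e3: "m12 * n11 = m22 * n21"
    and e4: "p * (n11 * m11) + n12 * m12 = q * (p * (n21 * m21) + n22 * m22)"
    and e5: "n11 * m12 = q * (n21 * m22)" and e6: "n12 * m11 = q * (n22 * m21)"
    and det_M: "m11 * m22 - m12 * m21 \<noteq> 0" and det_N: "n11 * n22 - n12 * n21 \<noteq> 0"
    and "q \<noteq> 0"
  shows "p = q \<or> p = inverse q"
proof -
  define x where "x = m11 * n11 - m21 * n21"
  define y where "y = n11 * m11 - q * n21 * m21"
  define dm where "dm = m11 * m22 - m12 * m21"
  define dn where "dn = n11 * n22 - n12 * n21"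
  have x2: "m12 * n12 - m22 * n22 = - x"
    using e1 unfolding x_def by (simp add: algebra_simps)
  have y2: "n12 * m12 - q * n22 * m22 = - p * y"
    using e4 unfolding y_def by (simp add: algebra_simps)
  have "x * x = dm * dn"
    using e2 e3 x2 unfolding x_def dm_def dn_def by Groebner_Basis.algebra
  then have "x \<noteq> 0"
    using det_M det_N by (auto simp: dm_def dn_def)
  have "dm * (x * (1 + q) - y * (1 + p)) = 0"
    using e1 e2 e3 e4 e5 e6 x2 y2 unfolding x_def y_def dm_def by Groebner_Basis.algebra
  then have xy: "x * (1 + q) = y * (1 + p)"
    using det_M by (simp add: dm_def)
  have "dm * dm * (q * x * x - p * y * y) = 0"
    using e1 e2 e3 e4 e5 e6 x2 y2 unfolding x_def y_def dm_def by Groebner_Basis.algebra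
  then have xy2: "q * x * x = p * y * y"
    using det_M by (simp add: dm_def)
  have "x * x * ((p - q) * (p * q - 1)) =
      (q * x * x) * (1 + p) * (1 + p) - p * ((x * (1 + q)) * (x * (1 + q)))"
    by Groebner_Basis.algebra
  also have "\<dots> = (p * y * y) * (1 + p) * (1 + p) - p * ((y * (1 + p)) * (y * (1 + p)))"
    by (simp only: xy xy2)
  also have "\<dots> = 0" by Groebner_Basis.algebra
  finally have "(p - q) * (p * q - 1) = 0"
    using \<open>x \<noteq> 0\<close> by simp
  then have "p = q \<or> p * q = 1"
    by (simp only: mult_eq_0_iff right_minus_eq)
  then show ?thesis
    using \<open>q \<noteq> 0\<close> by (auto simp: field_simps)
qed

locale A_alg_iso =
  fixes q p :: "'k::field" and \<Phi> :: "(path \<Rightarrow> 'k) set \<Rightarrow> (path \<Rightarrow> 'k) set"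
  assumes iso: "\<Phi> \<in> ring_iso (A_alg q) (A_alg p)"
    and preserves_scalars: "\<And>c. \<Phi> (A_scalar q c) = A_scalar p c"

lemma A_iso_iff_A_alg_iso: "A_iso q p \<longleftrightarrow> (\<exists>\<Phi>. A_alg_iso q p \<Phi>)"
  by (auto simp: A_iso_def A_alg_iso_def)

context A_alg_iso
begin

definition img_rep :: "(path \<Rightarrow> 'k) set \<Rightarrow> path \<Rightarrow> 'k" where
  "img_rep X = rep (\<Phi> X)"

abbreviation Ev :: "vert \<Rightarrow> (path \<Rightarrow> 'k) set" where "Ev v \<equiv> cls q (vtx v)"
abbreviation Ar :: "arr \<Rightarrow> (path \<Rightarrow> 'k) set" where "Ar x \<equiv> cls q (arw x)"

lemma Ev_closed: "Ev v \<in> carrier (A_alg q)"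
  by (rule cls_closed[OF vtx_carrier])

lemma Ar_closed: "Ar x \<in> carrier (A_alg q)"
  by (rule cls_closed[OF arw_carrier])

lemma ring_hom_Phi: "\<Phi> \<in> ring_hom (A_alg q) (A_alg p)"
  using iso by (simp add: ring_iso_def)

lemma img_rep_closed: "X \<in> carrier (A_alg q) \<Longrightarrow> img_rep X \<in> carrier path_algebra"
  unfolding img_rep_def by (rule rep_closed[OF ring_hom_closed[OF ring_hom_Phi]])

lemma valid_path_img_rep: "X \<in> carrier (A_alg q) \<Longrightarrow> img_rep X r \<noteq> 0 \<Longrightarrow> valid_path r"
  using img_rep_closed by (auto simp: carrier_path_algebra simp del: split_paired_All)

lemma Phi_eq_cls_img_rep: "X \<in> carrier (A_alg q) \<Longrightarrow> \<Phi> X = cls p (img_rep X)"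
  unfolding img_rep_def by (rule cls_rep[OF ring_hom_closed[OF ring_hom_Phi], symmetric])

lemma finite_supp_img_rep: "X \<in> carrier (A_alg q) \<Longrightarrow> finite (supp (img_rep X))"
  using img_rep_closed by (simp add: carrier_path_algebra)

lemma Phi_mult:
  "X \<in> carrier (A_alg q) \<Longrightarrow> Y \<in> carrier (A_alg q) \<Longrightarrow>
    \<Phi> (X \<otimes>\<^bsub>A_alg q\<^esub> Y) = cls p (img_rep X \<otimes>\<^bsub>path_algebra\<^esub> img_rep Y)"
  by (simp add: ring_hom_mult[OF ring_hom_Phi] Phi_eq_cls_img_rep cls_mult img_rep_closed)

lemma Phi_add:
  "X \<in> carrier (A_alg q) \<Longrightarrow> Y \<in> carrier (A_alg q) \<Longrightarrow>
    \<Phi> (X \<oplus>\<^bsub>A_alg q\<^esub> Y) = cls p (img_rep X \<oplus>\<^bsub>path_algebra\<^esub> img_rep Y)"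
  by (simp add: ring_hom_add[OF ring_hom_Phi] Phi_eq_cls_img_rep cls_add img_rep_closed)

lemma Phi_scalar_mult:
  "X \<in> carrier (A_alg q) \<Longrightarrow> \<Phi> (A_scalar q c \<otimes>\<^bsub>A_alg q\<^esub> X) = cls p (scal c (img_rep X))"
  by (simp add: ring_hom_mult[OF ring_hom_Phi A_scalar_closed] preserves_scalars Phi_eq_cls_img_rep
      A_scalar_mult_cls img_rep_closed)

lemma img_rep_mult_low:
  "X \<in> carrier (A_alg q) \<Longrightarrow> Y \<in> carrier (A_alg q) \<Longrightarrow> length ys \<le> 1 \<Longrightarrow>
    img_rep (X \<otimes>\<^bsub>A_alg q\<^esub> Y) (v, ys) = path_mult (img_rep X) (img_rep Y) (v, ys)"
  unfolding img_rep_def[of "X \<otimes>\<^bsub>A_alg q\<^esub> Y"] Phi_mult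
  using rep_cls_low[OF ring.ring_simprules(5)[OF ring_path_algebra img_rep_closed img_rep_closed]]
  by (simp add: path_algebra_simps)

lemma img_rep_add_low:
  "X \<in> carrier (A_alg q) \<Longrightarrow> Y \<in> carrier (A_alg q) \<Longrightarrow> length ys \<le> 1 \<Longrightarrow>
    img_rep (X \<oplus>\<^bsub>A_alg q\<^esub> Y) (v, ys) = img_rep X (v, ys) + img_rep Y (v, ys)"
  unfolding img_rep_def[of "X \<oplus>\<^bsub>A_alg q\<^esub> Y"] Phi_add
  using rep_cls_low[OF ring.ring_simprules(1)[OF ring_path_algebra img_rep_closed img_rep_closed]]
  by (simp add: path_algebra_simps)

lemma img_rep_scalar_mult_low:
  "X \<in> carrier (A_alg q) \<Longrightarrow> length ys \<le> 1 \<Longrightarrow>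
    img_rep (A_scalar q c \<otimes>\<^bsub>A_alg q\<^esub> X) (v, ys) = c * img_rep X (v, ys)"
  unfolding img_rep_def[of "A_scalar q c \<otimes>\<^bsub>A_alg q\<^esub> X"] Phi_scalar_mult
  using rep_cls_low[OF scal_carrier[OF img_rep_closed]] by (simp add: scal_def)

lemma img_rep_one_low:
  assumes "length ys \<le> 1"
  shows "img_rep \<one>\<^bsub>A_alg q\<^esub> (v, ys) = (if ys = [] then 1 else 0)"
  unfolding img_rep_def ring_hom_one[OF ring_hom_Phi] unfolding one_A_alg
    rep_cls_low[OF ring.ring_simprules(6)[OF ring_path_algebra] assms]
  by (simp add: path_algebra_simps)

lemma img_rep_zero_low:
  assumes "length ys \<le> 1"
  shows "img_rep \<zero>\<^bsub>A_alg q\<^esub> (v, ys) = 0"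
  unfolding img_rep_def ring_hom_zero[OF ring_hom_Phi ring_A_alg ring_A_alg] unfolding zero_A_alg
    rep_cls_low[OF ring.ring_simprules(2)[OF ring_path_algebra] assms]
  by (simp add: path_algebra_simps)

definition \<theta> :: "vert \<Rightarrow> (path \<Rightarrow> 'k) set \<Rightarrow> 'k" where
  "\<theta> v X = img_rep X (v, [])"

lemma theta_mult:
  "X \<in> carrier (A_alg q) \<Longrightarrow> Y \<in> carrier (A_alg q) \<Longrightarrow> \<theta> v (X \<otimes>\<^bsub>A_alg q\<^esub> Y) = \<theta> v X * \<theta> v Y"
  by (simp add: \<theta>_def img_rep_mult_low path_mult_Nil finite_supp_img_rep)

lemma img_rep_mult_single:
  "X \<in> carrier (A_alg q) \<Longrightarrow> Y \<in> carrier (A_alg q) \<Longrightarrow>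
    img_rep (X \<otimes>\<^bsub>A_alg q\<^esub> Y) (v, [y]) = \<theta> v X * img_rep Y (v, [y]) + img_rep X (v, [y]) * \<theta> (tgt y) Y"
  by (simp add: \<theta>_def img_rep_mult_low path_mult_single finite_supp_img_rep)

lemma theta_Ev_add: "\<theta> v (Ev E1) + \<theta> v (Ev E2) = 1"
proof -
  have "\<theta> v (Ev E1) + \<theta> v (Ev E2) = \<theta> v (Ev E1 \<oplus>\<^bsub>A_alg q\<^esub> Ev E2)"
    by (simp add: \<theta>_def img_rep_add_low Ev_closed)
  also have "Ev E1 \<oplus>\<^bsub>A_alg q\<^esub> Ev E2 = \<one>\<^bsub>A_alg q\<^esub>"
    by (simp add: cls_add vtx_carrier vtx_sum one_A_alg)
  finally show ?thesis by (simp add: \<theta>_def img_rep_one_low)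
qed

lemma theta_Ev_mult: "\<theta> v (Ev E1) * \<theta> v (Ev E2) = 0"
proof -
  have "\<theta> v (Ev E1) * \<theta> v (Ev E2) = \<theta> v (Ev E1 \<otimes>\<^bsub>A_alg q\<^esub> Ev E2)"
    by (simp add: theta_mult Ev_closed)
  also have "Ev E1 \<otimes>\<^bsub>A_alg q\<^esub> Ev E2 = \<zero>\<^bsub>A_alg q\<^esub>"
    by (simp add: cls_mult vtx_carrier vtx_orthogonal zero_A_alg)
  finally show ?thesis by (simp add: \<theta>_def img_rep_zero_low)
qed

lemma Ar_eq: "Ar x = Ev (src x) \<otimes>\<^bsub>A_alg q\<^esub> (Ar x \<otimes>\<^bsub>A_alg q\<^esub> Ev (tgt x))"
  by (simp add: cls_mult vtx_carrier arw_carrier arw_mult_vtx vtx_mult_arw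
      ring.ring_simprules(5)[OF ring_path_algebra])

lemma theta_Ar: "\<theta> v (Ar x) = 0"
proof -
  have "\<theta> v (Ar x) = \<theta> v (Ar x) * (\<theta> v (Ev (src x)) * \<theta> v (Ev (tgt x)))"
    by (subst Ar_eq)
      (simp add: theta_mult Ev_closed Ar_closed ring.ring_simprules(5)[OF ring_A_alg])
  also have "\<theta> v (Ev (src x)) * \<theta> v (Ev (tgt x)) = 0"
    using theta_Ev_mult[of v] src_neq_tgt[of x]
    by (cases "src x"; cases "tgt x") (simp_all add: mult.commute)
  finally show ?thesis by simp
qed

lemma theta_bpath:
  "valid_path r \<Longrightarrow> \<theta> v (cls q (bpath r)) = (if snd r = [] then \<theta> v (Ev (fst r)) else 0)"
proof (cases r)
  case (Pair w ys)
  assume valid: "valid_path r"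
  show ?thesis
  proof (cases ys)
    case (Cons y zs)
    have tail: "bpath (tgt y, zs) \<in> carrier path_algebra"
      using valid by (intro bpath_carrier valid_path_Cons_tail) (simp add: Pair Cons)
    have "cls q (bpath r) = Ar y \<otimes>\<^bsub>A_alg q\<^esub> cls q (bpath (tgt y, zs))"
      using valid by (simp add: Pair Cons bpath_Cons cls_mult arw_carrier tail)
    then show ?thesis
      using theta_mult[OF Ar_closed cls_closed[OF tail]] by (simp add: theta_Ar Pair Cons)
  qed (simp add: Pair vtx_def)
qed

lemma theta_cls:
  assumes f: "f \<in> carrier path_algebra"
  shows "\<theta> v (cls q f) = f (E1, []) * \<theta> v (Ev E1) + f (E2, []) * \<theta> v (Ev E2)"
proof -
  define g where "g = (\<lambda>r::path. if snd r = [] then \<theta> v (Ev (fst r)) else 0)"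
  have "\<theta> v (cls q f) = (\<Sum>r\<in>supp f. f r * \<theta> v (cls q (bpath r)))"
    using f by (intro linear_functional_A_alg_expansion)
      (simp_all add: \<theta>_def img_rep_add_low img_rep_scalar_mult_low)
  also have "\<dots> = (\<Sum>r\<in>supp f. f r * g r)"
    using f by (intro sum.cong refl) (auto simp: g_def theta_bpath supp_def carrier_path_algebra)
  also have "\<dots> = (\<Sum>r\<in>{(E1, []), (E2, [])}. f r * g r)"
  proof (rule sum.mono_neutral_cong)
    show "finite (supp f)" using f by (simp add: carrier_path_algebra)
    show "f r * g r = 0" if "r \<in> supp f - {(E1, []), (E2, [])}" for r
      using that by (cases r) (auto simp: g_def, metis vert.exhaust)
    show "f r * g r = 0" if "r \<in> {(E1, []), (E2, [])} - supp f" for r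
      using that by (simp add: supp_def)
  qed auto
  also have "\<dots> = f (E1, []) * \<theta> v (Ev E1) + f (E2, []) * \<theta> v (Ev E2)"
    by (simp add: g_def)
  finally show ?thesis .
qed

lemma theta_Ev_cases:
  "(\<forall>v u. \<theta> v (Ev u) = (if v = u then 1 else 0)) \<or> (\<forall>v u. \<theta> v (Ev u) = (if v = u then 0 else 1))"
proof -
  have E2: "\<theta> v (Ev E2) = 1 - \<theta> v (Ev E1)" for v
    using theta_Ev_add[of v] by (simp add: eq_diff_eq add.commute)
  have idem: "\<theta> v (Ev E1) = 0 \<or> \<theta> v (Ev E1) = 1" for v
    using theta_Ev_mult[of v] by (simp add: E2 right_diff_distrib)
  have "cls p (vtx E1) \<in> \<Phi> ` carrier (A_alg q)"
    using iso cls_closed[OF vtx_carrier] by (simp add: ring_iso_def bij_betw_def)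
  then obtain f where f: "f \<in> carrier path_algebra" "\<Phi> (cls q f) = cls p (vtx E1)"
    unfolding carrier_A_alg[of q] by blast
  have "\<theta> v (cls q f) = (if v = E1 then 1 else 0)" for v
    unfolding \<theta>_def img_rep_def f(2) using rep_cls_low[OF vtx_carrier, where p = p]
    by (simp add: vtx_def bpath_def)
  then have "\<theta> E1 (Ev E1) \<noteq> \<theta> E2 (Ev E1)"
    using theta_cls[OF f(1), of E1] theta_cls[OF f(1), of E2] by (auto simp: E2 algebra_simps)
  with idem[of E1] idem[of E2] show ?thesis
    by (auto simp: all_vert_iff E2)
qed

text \<open>An element without components of length at most one is a combination of paths of
  length at least two, i.e. of products of an arrow with a nontrivial path; both factors are
  killed by the characters \<^term>\<open>\<theta> v\<close>, so the image has no component of length one either.\<close>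

lemma img_rep_single_eq_zero:
  assumes G: "G \<in> carrier path_algebra" and low: "\<And>v ys. length ys \<le> 1 \<Longrightarrow> G (v, ys) = 0"
  shows "img_rep (cls q G) (w, [y]) = 0"
proof -
  have "img_rep (cls q G) (w, [y]) = (\<Sum>r\<in>supp G. G r * img_rep (cls q (bpath r)) (w, [y]))"
    using G by (intro linear_functional_A_alg_expansion)
      (simp_all add: img_rep_add_low img_rep_scalar_mult_low)
  also have "\<dots> = 0"
  proof (intro sum.neutral ballI)
    fix r assume r: "r \<in> supp G"
    obtain u zs where r_eq: "r = (u, zs)" by (cases r)
    have "\<not> length zs \<le> 1" using low[of zs u] r r_eq by (auto simp: supp_def)
    then obtain z1 z2 zr where zs: "zs = z1 # z2 # zr"
      by (cases zs; cases "tl zs") auto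
    have valid: "valid_path (u, z1 # z2 # zr)"
      using G r by (auto simp: carrier_path_algebra supp_def r_eq zs)
    then have tail: "bpath (tgt z1, z2 # zr) \<in> carrier path_algebra"
      by (intro bpath_carrier valid_path_Cons_tail)
    have "cls q (bpath r) = Ar z1 \<otimes>\<^bsub>A_alg q\<^esub> cls q (bpath (tgt z1, z2 # zr))"
      using valid by (simp add: r_eq zs bpath_Cons cls_mult arw_carrier tail)
    then have "img_rep (cls q (bpath r)) (w, [y]) = 0"
      using valid_path_Cons_tail[OF valid]
      by (simp add: img_rep_mult_single Ar_closed cls_closed[OF tail] theta_Ar theta_bpath)
    then show "G r * img_rep (cls q (bpath r)) (w, [y]) = 0" by simp
  qed
  finally show ?thesis .
qed

lemma inj_on_Phi: "inj_on \<Phi> (carrier (A_alg q))"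
  using iso by (simp add: ring_iso_def bij_betw_def)

lemma A_alg_iso_inv: "A_alg_iso p q (inv_into (carrier (A_alg q)) \<Phi>)"
proof
  show "inv_into (carrier (A_alg q)) \<Phi> \<in> ring_iso (A_alg p) (A_alg q)"
    by (rule ring_iso_set_sym[OF ring_A_alg iso])
  show "inv_into (carrier (A_alg q)) \<Phi> (A_scalar p c) = A_scalar q c" for c
    using inv_into_f_f[OF inj_on_Phi A_scalar_closed] by (simp add: preserves_scalars)
qed

text \<open>The arrows are linearly independent modulo paths of length at least two, and so are
  their images under \<open>\<Phi>\<close>: apply the previous lemma to \<open>\<Phi>\<inverse>\<close>.\<close>

lemma img_rep_Ar_independent:
  assumes "x \<noteq> x'"
    and low: "\<And>v ys. length ys \<le> 1 \<Longrightarrow> u1 * img_rep (Ar x) (v, ys) + u2 * img_rep (Ar x') (v, ys) = 0"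
  shows "u1 = 0 \<and> u2 = 0"
proof -
  interpret inv: A_alg_iso p q "inv_into (carrier (A_alg q)) \<Phi>" by (rule A_alg_iso_inv)
  define g where "g = scal u1 (arw x) \<oplus>\<^bsub>path_algebra\<^esub> scal u2 (arw x')"
  define G where "G = scal u1 (img_rep (Ar x)) \<oplus>\<^bsub>path_algebra\<^esub> scal u2 (img_rep (Ar x'))"
  have g: "g \<in> carrier path_algebra" and G: "G \<in> carrier path_algebra"
    unfolding g_def G_def
    by (intro ring.ring_simprules(1)[OF ring_path_algebra] scal_carrier arw_carrier
        img_rep_closed Ar_closed)+
  have "cls q g = A_scalar q u1 \<otimes>\<^bsub>A_alg q\<^esub> Ar x \<oplus>\<^bsub>A_alg q\<^esub> A_scalar q u2 \<otimes>\<^bsub>A_alg q\<^esub> Ar x'"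
    unfolding g_def by (simp add: A_scalar_mult_cls arw_carrier cls_add scal_carrier)
  then have "\<Phi> (cls q g) = cls p G"
    by (simp add: ring_hom_add[OF ring_hom_Phi] ring.ring_simprules(5)[OF ring_A_alg] A_scalar_closed
        Ar_closed Phi_scalar_mult cls_add scal_carrier img_rep_closed G_def)
  then have "inv_into (carrier (A_alg q)) \<Phi> (cls p G) = cls q g"
    using inv_into_f_f[OF inj_on_Phi cls_closed[OF g]] by simp
  moreover have "inv.img_rep (cls p G) (w, [y]) = 0" for w y
    using low by (intro inv.img_rep_single_eq_zero[OF G])
      (simp add: G_def scal_def path_algebra_simps)
  ultimately have "g (w, [y]) = 0" for w y
    using rep_cls_low[OF g] by (simp add: inv.img_rep_def)
  from this[of "src x" x] this[of "src x'" x'] \<open>x \<noteq> x'\<close> show ?thesis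
    by (simp add: g_def path_algebra_simps scal_def arw_def bpath_def)
qed

definition arrow_coeff :: "arr \<Rightarrow> arr \<Rightarrow> 'k" where
  "arrow_coeff x y = img_rep (Ar x) (src y, [y])"

lemma img_rep_Ar_Nil: "img_rep (Ar x) (v, []) = 0"
  using theta_Ar by (simp add: \<theta>_def)

lemma img_rep_Ar_single: "img_rep (Ar x) (v, [y]) = (if v = src y then arrow_coeff x y else 0)"
  using valid_path_img_rep[OF Ar_closed, of x "(v, [y])"]
  by (auto simp: arrow_coeff_def valid_path_def)

lemma arrow_coeff_eq:
  "arrow_coeff x y = \<theta> (src y) (Ev (src x)) * \<theta> (tgt y) (Ev (tgt x)) * arrow_coeff x y"
proof -
  have closed: "Ar x \<otimes>\<^bsub>A_alg q\<^esub> Ev (tgt x) \<in> carrier (A_alg q)"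
    by (simp add: ring.ring_simprules(5)[OF ring_A_alg] Ar_closed Ev_closed)
  have "\<theta> (tgt y) (Ar x \<otimes>\<^bsub>A_alg q\<^esub> Ev (tgt x)) = 0"
    by (simp add: theta_mult Ar_closed Ev_closed theta_Ar)
  then show ?thesis
    unfolding arrow_coeff_def
    by (subst (1) Ar_eq) (simp add: img_rep_mult_single Ev_closed closed Ar_closed theta_Ar)
qed

lemma img_rep_Ar_mult_pair:
  "(img_rep (Ar x) \<otimes>\<^bsub>path_algebra\<^esub> img_rep (Ar x')) (v, [y, z]) =
    img_rep (Ar x) (v, [y]) * img_rep (Ar x') (tgt y, [z])"
  by (simp add: path_algebra_simps path_mult_pair finite_supp_img_rep Ar_closed img_rep_Ar_Nil)

lemma deg2_coords_img_rep_mult: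
  assumes "X \<in> carrier (A_alg q)" "Y \<in> carrier (A_alg q)" "X' \<in> carrier (A_alg q)"
    "Y' \<in> carrier (A_alg q)" "X \<otimes>\<^bsub>A_alg q\<^esub> Y = A_scalar q c \<otimes>\<^bsub>A_alg q\<^esub> (X' \<otimes>\<^bsub>A_alg q\<^esub> Y')"
  shows "deg2_coords p (img_rep X \<otimes>\<^bsub>path_algebra\<^esub> img_rep Y) =
    deg2_coords p (scal c (img_rep X' \<otimes>\<^bsub>path_algebra\<^esub> img_rep Y'))"
proof (rule cls_eq_imp_deg2_coords_eq)
  have closed: "X' \<otimes>\<^bsub>A_alg q\<^esub> Y' \<in> carrier (A_alg q)"
    using assms by (simp add: ring.ring_simprules(5)[OF ring_A_alg])
  show "img_rep X \<otimes>\<^bsub>path_algebra\<^esub> img_rep Y \<in> carrier path_algebra"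
    "scal c (img_rep X' \<otimes>\<^bsub>path_algebra\<^esub> img_rep Y') \<in> carrier path_algebra"
    using assms
    by (simp_all add: ring.ring_simprules(5)[OF ring_path_algebra] scal_carrier img_rep_closed)
  have "cls p (img_rep X \<otimes>\<^bsub>path_algebra\<^esub> img_rep Y) = \<Phi> (A_scalar q c \<otimes>\<^bsub>A_alg q\<^esub> (X' \<otimes>\<^bsub>A_alg q\<^esub> Y'))"
    using Phi_mult[OF assms(1,2)] assms(5) by simp
  also have "\<dots> = A_scalar p c \<otimes>\<^bsub>A_alg p\<^esub> \<Phi> (X' \<otimes>\<^bsub>A_alg q\<^esub> Y')"
    by (simp add: ring_hom_mult[OF ring_hom_Phi A_scalar_closed closed] preserves_scalars)
  also have "\<dots> = cls p (scal c (img_rep X' \<otimes>\<^bsub>path_algebra\<^esub> img_rep Y'))"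
    using assms by (simp add: Phi_mult A_scalar_mult_cls img_rep_closed
        ring.ring_simprules(5)[OF ring_path_algebra])
  finally show "cls p (img_rep X \<otimes>\<^bsub>path_algebra\<^esub> img_rep Y) =
      cls p (scal c (img_rep X' \<otimes>\<^bsub>path_algebra\<^esub> img_rep Y'))" .
qed

lemma rel1_arrow_coeffs:
  "arrow_coeff Arr_a Arr_a * arrow_coeff Arr_b Arr_b +
      arrow_coeff Arr_a Arr_c * arrow_coeff Arr_b Arr_d =
    arrow_coeff Arr_c Arr_a * arrow_coeff Arr_d Arr_b +
      arrow_coeff Arr_c Arr_c * arrow_coeff Arr_d Arr_d"
  "arrow_coeff Arr_a Arr_a * arrow_coeff Arr_b Arr_d =
    arrow_coeff Arr_c Arr_a * arrow_coeff Arr_d Arr_d"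
  "arrow_coeff Arr_a Arr_c * arrow_coeff Arr_b Arr_b =
    arrow_coeff Arr_c Arr_c * arrow_coeff Arr_d Arr_b"
  using deg2_coords_img_rep_mult[OF Ar_closed Ar_closed Ar_closed Ar_closed A_alg_rel1]
  by (simp_all add: deg2_coords_def scal_def img_rep_Ar_mult_pair img_rep_Ar_single)

lemma rel2_arrow_coeffs:
  "p * (arrow_coeff Arr_b Arr_b * arrow_coeff Arr_a Arr_a) +
      arrow_coeff Arr_b Arr_d * arrow_coeff Arr_a Arr_c =
    q * (p * (arrow_coeff Arr_d Arr_b * arrow_coeff Arr_c Arr_a) +
      arrow_coeff Arr_d Arr_d * arrow_coeff Arr_c Arr_c)"
  "arrow_coeff Arr_b Arr_b * arrow_coeff Arr_a Arr_c =
    q * (arrow_coeff Arr_d Arr_b * arrow_coeff Arr_c Arr_c)"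
  "arrow_coeff Arr_b Arr_d * arrow_coeff Arr_a Arr_a =
    q * (arrow_coeff Arr_d Arr_d * arrow_coeff Arr_c Arr_a)"
  using deg2_coords_img_rep_mult[OF Ar_closed Ar_closed Ar_closed Ar_closed A_alg_rel2]
  by (simp_all add: deg2_coords_def scal_def img_rep_Ar_mult_pair img_rep_Ar_single algebra_simps)

lemma arrow_coeff_det_neq_zero:
  assumes "x \<noteq> x'" and out: "\<And>y. src y = src x \<longleftrightarrow> y = x \<or> y = x'"
    and vanish: "\<And>y. src y \<noteq> src x \<Longrightarrow> arrow_coeff x y = 0 \<and> arrow_coeff x' y = 0"
  shows "arrow_coeff x x * arrow_coeff x' x' - arrow_coeff x x' * arrow_coeff x' x \<noteq> 0"
proof (rule det2_neq_zeroI)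
  fix u1 u2
  assume "u1 * arrow_coeff x x + u2 * arrow_coeff x' x = 0"
    "u1 * arrow_coeff x x' + u2 * arrow_coeff x' x' = 0"
  then have "u1 * arrow_coeff x y + u2 * arrow_coeff x' y = 0" for y
    using out[of y] vanish[of y] by (cases "src y = src x") auto
  then have "u1 * img_rep (Ar x) (v, ys) + u2 * img_rep (Ar x') (v, ys) = 0"
    if "length ys \<le> 1" for v ys
    using that by (cases ys) (auto simp: img_rep_Ar_Nil img_rep_Ar_single)
  then show "u1 = 0 \<and> u2 = 0"
    by (rule img_rep_Ar_independent[OF \<open>x \<noteq> x'\<close>])
qed

lemma eq_or_inverse_if_fixes_vertices:
  assumes fixed: "\<And>v u. \<theta> v (Ev u) = (if v = u then 1 else 0)" and "q \<noteq> 0"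
  shows "p = q \<or> p = inverse q"
proof -
  have vanish: "arrow_coeff x y = 0" if "src y \<noteq> src x" for x y
    using arrow_coeff_eq[of x y] that by (simp add: fixed)
  have "arrow_coeff Arr_a Arr_a * arrow_coeff Arr_c Arr_c -
      arrow_coeff Arr_a Arr_c * arrow_coeff Arr_c Arr_a \<noteq> 0"
    by (rule arrow_coeff_det_neq_zero) (auto simp: vanish elim: src.elims)
  moreover have "arrow_coeff Arr_b Arr_b * arrow_coeff Arr_d Arr_d -
      arrow_coeff Arr_b Arr_d * arrow_coeff Arr_d Arr_b \<noteq> 0"
    by (rule arrow_coeff_det_neq_zero) (auto simp: vanish elim: src.elims)
  ultimately show ?thesis
    by (rule relation_coeffs_imp_eq_or_inverse[OF rel1_arrow_coeffs rel2_arrow_coeffs _ _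
          \<open>q \<noteq> 0\<close>])
qed

end

section \<open>The isomorphism \<open>A(q) \<cong> A(q\<inverse>)\<close>\<close>

lemma ring_iso_FactRing:
  assumes R: "ring R" and S: "ring S" and \<sigma>: "\<sigma> \<in> ring_iso R S"
    and I: "ideal I R" and J: "ideal J S" and IJ: "\<sigma> ` I = J"
  obtains \<Psi> where "\<Psi> \<in> ring_iso (R Quot I) (S Quot J)"
    and "\<And>x. x \<in> carrier R \<Longrightarrow> \<Psi> (I +>\<^bsub>R\<^esub> x) = J +>\<^bsub>S\<^esub> \<sigma> x"
proof -
  define h where "h = (\<lambda>x. J +>\<^bsub>S\<^esub> \<sigma> x)"
  have \<sigma>_hom: "\<sigma> \<in> ring_hom R S" and \<sigma>_bij: "bij_betw \<sigma> (carrier R) (carrier S)"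
    using \<sigma> by (simp_all add: ring_iso_def)
  have "h \<in> ring_hom R (S Quot J)"
    using ring_hom_trans[OF \<sigma>_hom ideal.rcos_ring_hom[OF J]] by (simp add: h_def comp_def)
  then interpret h: ring_hom_ring R "S Quot J" h
    by (intro ring_hom_ringI2 R ideal.quotient_is_ring[OF J])
  have "h ` carrier R = (\<lambda>y. J +>\<^bsub>S\<^esub> y) ` \<sigma> ` carrier R"
    by (simp add: h_def image_image)
  also have "\<dots> = carrier (S Quot J)"
    using bij_betw_imp_surj_on[OF \<sigma>_bij]
    by (auto simp: FactRing_def A_RCOSETS_def RCOSETS_def a_r_coset_def)
  finally have surj: "h ` carrier R = carrier (S Quot J)" .
  have I_sub: "I \<subseteq> carrier R" using ideal.Icarr[OF I] by blast
  have "a_kernel R (S Quot J) h = {x \<in> carrier R. \<sigma> x \<in> J}"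
    using ideal.rcos_const_imp_mem[OF J] ring.a_rcos_zero[OF S J] ring_hom_closed[OF \<sigma>_hom]
    by (auto simp: a_kernel_def' h_def FactRing_def)
  also have "\<dots> = I"
    using IJ I_sub bij_betw_imp_inj_on[OF \<sigma>_bij] by (auto dest: inj_onD)
  finally have ker: "a_kernel R (S Quot J) h = I" .
  show ?thesis
  proof
    show "(\<lambda>X. the_elem (h ` X)) \<in> ring_iso (R Quot I) (S Quot J)"
      using h.FactRing_iso_set[OF surj] by (simp add: ker)
    show "the_elem (h ` (I +>\<^bsub>R\<^esub> x)) = J +>\<^bsub>S\<^esub> \<sigma> x" if "x \<in> carrier R" for x
      using h.the_elem_simp[OF that] unfolding ker by (simp add: h_def)
  qed
qed

fun vert_swap :: "vert \<Rightarrow> vert" where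
  "vert_swap E1 = E2" | "vert_swap E2 = E1"

fun arr_swap :: "arr \<Rightarrow> arr" where
  "arr_swap Arr_a = Arr_b" | "arr_swap Arr_b = Arr_a"
| "arr_swap Arr_c = Arr_d" | "arr_swap Arr_d = Arr_c"

definition path_swap :: "path \<Rightarrow> path" where
  "path_swap r = (vert_swap (fst r), map arr_swap (snd r))"

definition arr_count :: "arr \<Rightarrow> arr list \<Rightarrow> nat" where
  "arr_count x xs = length (filter (\<lambda>y. y = x) xs)"

text \<open>The linear endomorphism of kQ exchanging the vertices and sending
  \<open>a \<mapsto> b\<close>, \<open>b \<mapsto> a\<close>, \<open>c \<mapsto> l d\<close>, \<open>d \<mapsto> m c\<close>.\<close>

definition twist :: "'k::field \<Rightarrow> 'k \<Rightarrow> (path \<Rightarrow> 'k) \<Rightarrow> path \<Rightarrow> 'k" where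
  "twist l m f = (\<lambda>r. l ^ arr_count Arr_d (snd r) * m ^ arr_count Arr_c (snd r) * f (path_swap r))"

lemma vert_swap_vert_swap [simp]: "vert_swap (vert_swap v) = v"
  by (cases v) auto

lemma vert_swap_eq_iff: "vert_swap v = u \<longleftrightarrow> v \<noteq> u"
  by (cases v; cases u) auto

lemma arr_swap_arr_swap [simp]: "arr_swap (arr_swap x) = x"
  by (cases x) auto

lemma arr_swap_comp_arr_swap [simp]: "arr_swap \<circ> arr_swap = id"
  by (rule ext) simp

lemma path_swap_path_swap [simp]: "path_swap (path_swap r) = r"
  by (simp add: path_swap_def)

lemma path_swap_eq_iff: "path_swap r = s \<longleftrightarrow> r = path_swap s"
  by auto

lemma src_arr_swap [simp]: "src (arr_swap x) = vert_swap (src x)"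
  by (cases x) auto

lemma tgt_arr_swap [simp]: "tgt (arr_swap x) = vert_swap (tgt x)"
  by (cases x) auto

lemma end_from_arr_swap [simp]:
  "end_from (vert_swap v) (map arr_swap xs) = vert_swap (end_from v xs)"
  by (induction xs arbitrary: v) auto

lemma valid_from_arr_swap [simp]: "valid_from (vert_swap v) (map arr_swap xs) = valid_from v xs"
  by (induction xs arbitrary: v) (auto, metis vert_swap_vert_swap)

lemma valid_path_swap [simp]: "valid_path (path_swap r) = valid_path r"
  by (simp add: path_swap_def valid_path_def)

lemma arr_count_arr_swap [simp]:
  "arr_count Arr_d (map arr_swap xs) = arr_count Arr_c xs"
  "arr_count Arr_c (map arr_swap xs) = arr_count Arr_d xs"
  by (induction xs) (auto simp: arr_count_def elim: arr_swap.elims)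

lemma arr_count_take_drop: "arr_count x xs = arr_count x (take i xs) + arr_count x (drop i xs)"
  by (metis append_take_drop_id arr_count_def filter_append length_append)

lemma twist_carrier:
  assumes "f \<in> carrier path_algebra"
  shows "twist l m f \<in> carrier (path_algebra :: (path \<Rightarrow> 'k::field) ring)"
proof -
  have "supp (twist l m f) \<subseteq> path_swap ` supp f"
    by (auto simp: supp_def twist_def intro!: image_eqI[where x = "path_swap r" for r])
  moreover have "valid_path r" if "twist l m f r \<noteq> 0" for r
    using that assms valid_path_swap[of r]
    by (auto simp: twist_def carrier_path_algebra simp del: split_paired_All valid_path_swap)
  ultimately show ?thesis
    using assms by (auto simp: carrier_path_algebra intro: finite_subset)
qed

lemma twist_mult:
  assumes f: "f \<in> carrier path_algebra"
    and g: "g \<in> carrier (path_algebra :: (path \<Rightarrow> 'k::field) ring)"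
  shows "twist l m (path_mult f g) = path_mult (twist l m f) (twist l m g)"
proof
  fix r :: path
  obtain v xs where r: "r = (v, xs)" by (cases r)
  define w where "w = (\<lambda>ys. l ^ arr_count Arr_d ys * m ^ arr_count Arr_c ys)"
  have w_split: "w xs = w (take i xs) * w (drop i xs)" for i
    unfolding w_def
    by (subst (1 2) arr_count_take_drop[of _ _ i]) (simp add: power_add algebra_simps)
  have fin: "finite (supp f)" "finite (supp g)"
    "finite (supp (twist l m f))" "finite (supp (twist l m g))"
    using f g twist_carrier[OF f] twist_carrier[OF g] by (simp_all add: carrier_path_algebra)
  define F where "F = (\<lambda>i. f (vert_swap v, map arr_swap (take i xs)))"
  define G where "G = (\<lambda>i. g (vert_swap (end_from v (take i xs)), map arr_swap (drop i xs)))"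
  have "twist l m (path_mult f g) r = w xs * (\<Sum>i\<le>length xs. F i * G i)"
    unfolding r twist_def w_def F_def G_def
    using path_mult_eq_sum[OF fin(1,2), of "vert_swap v" "map arr_swap xs"]
    by (simp add: path_swap_def take_map drop_map)
  also have "\<dots> = (\<Sum>i\<le>length xs. (w (take i xs) * F i) * (w (drop i xs) * G i))"
    unfolding sum_distrib_left
  proof (intro sum.cong refl)
    fix i
    show "w xs * (F i * G i) = w (take i xs) * F i * (w (drop i xs) * G i)"
      by (simp add: w_split[of i] ac_simps)
  qed
  also have "\<dots> = path_mult (twist l m f) (twist l m g) r"
    unfolding r path_mult_eq_sum[OF fin(3,4)]
    by (simp add: twist_def path_swap_def w_def F_def G_def)
  finally show "twist l m (path_mult f g) r = path_mult (twist l m f) (twist l m g) r" .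
qed

lemma twist_ring_hom: "twist l m \<in> ring_hom path_algebra (path_algebra :: (path \<Rightarrow> 'k::field) ring)"
proof (rule ring_hom_memI)
  fix f g :: "path \<Rightarrow> 'k"
  assume "f \<in> carrier path_algebra" "g \<in> carrier path_algebra"
  then show "twist l m (f \<otimes>\<^bsub>path_algebra\<^esub> g) = twist l m f \<otimes>\<^bsub>path_algebra\<^esub> twist l m g"
    by (simp add: path_algebra_simps twist_mult)
  show "twist l m (f \<oplus>\<^bsub>path_algebra\<^esub> g) = twist l m f \<oplus>\<^bsub>path_algebra\<^esub> twist l m g"
    by (rule ext) (simp add: path_algebra_simps twist_def algebra_simps)
next
  show "twist l m \<one>\<^bsub>path_algebra\<^esub> = (\<one>\<^bsub>path_algebra\<^esub> :: path \<Rightarrow> 'k)"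
    by (rule ext) (simp add: path_algebra_simps twist_def path_swap_def arr_count_def)
qed (rule twist_carrier)

lemma twist_twist:
  assumes "l * m' = 1" "m * l' = 1"
  shows "twist l m (twist l' m' f) = f"
proof
  fix r :: path
  have "twist l m (twist l' m' f) r =
      (l * m') ^ arr_count Arr_d (snd r) * (m * l') ^ arr_count Arr_c (snd r) * f r"
    by (simp add: twist_def path_swap_def algebra_simps)
  then show "twist l m (twist l' m' f) r = f r" by (simp add: assms)
qed

lemma twist_ring_iso:
  assumes "l * m' = 1" "m * l' = 1"
  shows "twist l m \<in> ring_iso path_algebra (path_algebra :: (path \<Rightarrow> 'k::field) ring)"
proof (rule ring_iso_memI)
  show "bij_betw (twist l m) (carrier path_algebra) (carrier (path_algebra :: (path \<Rightarrow> 'k) ring))"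
    using assms twist_carrier[where l = l' and m = m'] twist_carrier[where l = l and m = m]
    by (intro bij_betwI[where g = "twist l' m'"]) (auto simp: twist_twist mult.commute)
qed (use twist_ring_hom[of l m] in
    \<open>simp_all add: ring_hom_closed ring_hom_mult ring_hom_add ring_hom_one\<close>)

lemma twist_bpath:
  "twist l m (bpath r) = (\<lambda>s. if s = path_swap r
    then l ^ arr_count Arr_c (snd r) * m ^ arr_count Arr_d (snd r) else (0::'k::field))"
  by (rule ext) (auto simp: twist_def bpath_def path_swap_eq_iff path_swap_def)

lemma twist_rel1: "twist l m (rel1 :: path \<Rightarrow> 'k::field) = rel2 (l * m)"
proof -
  have "twist l m rel1 = (\<lambda>r. twist l m (bpath (E1, [Arr_a, Arr_b])) r -
      twist l m (bpath (E1, [Arr_c, Arr_d])) r)"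
    by (rule ext) (simp add: twist_def rel1_def algebra_simps)
  then show ?thesis
    unfolding twist_bpath rel2_def by (auto simp: path_swap_def arr_count_def bpath_def)
qed

lemma twist_rel2:
  assumes "s * (l * m) = 1"
  shows "twist l m (rel2 s :: path \<Rightarrow> 'k::field) = rel1"
proof -
  have "twist l m (rel2 s) = (\<lambda>r. twist l m (bpath (E2, [Arr_b, Arr_a])) r -
      s * twist l m (bpath (E2, [Arr_d, Arr_c])) r)"
    by (rule ext) (simp add: twist_def rel2_def algebra_simps)
  then show ?thesis
    using assms unfolding twist_bpath rel1_def
    by (auto simp: path_swap_def arr_count_def bpath_def algebra_simps)
qed

lemma twist_rel_ideal_subset:
  assumes "s * (l * m) = 1"
  shows "twist l m ` rel_ideal s \<subseteq> (rel_ideal (l * m) :: (path \<Rightarrow> 'k::field) set)"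
proof -
  interpret twist: ring_hom_ring "path_algebra :: (path \<Rightarrow> 'k) ring" path_algebra "twist l m"
    by (rule ring_hom_ringI2[OF ring_path_algebra ring_path_algebra twist_ring_hom])
  have "rel_ideal s \<subseteq> {f \<in> carrier path_algebra. twist l m f \<in> rel_ideal (l * m)}"
    unfolding rel_ideal_def[of s]
  proof (rule ring.genideal_minimal[OF ring_path_algebra twist.ideal_vimage[OF ideal_rel_ideal]])
    show "{rel1, rel2 s} \<subseteq> {f \<in> carrier path_algebra. twist l m f \<in> rel_ideal (l * m)}"
      using assms by (simp add: rel1_carrier rel2_carrier twist_rel1 twist_rel2 rels_in_rel_ideal)
  qed
  then show ?thesis by blast
qed

text \<open>For \<open>l = q\<inverse>\<close> and \<open>m = 1\<close>, \<^const>\<open>twist\<close> maps the relations \<open>ab - cd\<close> and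
  \<open>ba - q dc\<close> of \<open>A(q)\<close> to those of \<open>A(q\<inverse>)\<close>.\<close>

lemma twist_iso:
  fixes q :: "'k::field"
  assumes "q \<noteq> 0"
  obtains \<Psi> where "A_alg_iso q (inverse q) \<Psi>"
    and "\<And>f. f \<in> carrier path_algebra \<Longrightarrow> \<Psi> (cls q f) = cls (inverse q) (twist (inverse q) 1 f)"
proof -
  have image: "twist (inverse q) 1 ` rel_ideal q = rel_ideal (inverse q)"
  proof
    show "twist (inverse q) 1 ` rel_ideal q \<subseteq> rel_ideal (inverse q)"
      using twist_rel_ideal_subset[of q "inverse q" 1] assms by simp
    show "rel_ideal (inverse q) \<subseteq> twist (inverse q) 1 ` rel_ideal q"
    proof
      fix g assume "g \<in> rel_ideal (inverse q)"
      then have "twist 1 q g \<in> rel_ideal q"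
        using twist_rel_ideal_subset[of "inverse q" 1 q] assms by auto
      moreover have "g = twist (inverse q) 1 (twist 1 q g)"
        using assms by (simp add: twist_twist)
      ultimately show "g \<in> twist (inverse q) 1 ` rel_ideal q" by blast
    qed
  qed
  obtain \<Psi> where \<Psi>: "\<Psi> \<in> ring_iso (A_alg q) (A_alg (inverse q))"
    and \<Psi>_cls: "\<And>f. f \<in> carrier path_algebra \<Longrightarrow>
      \<Psi> (cls q f) = cls (inverse q) (twist (inverse q) 1 f)"
    using ring_iso_FactRing[OF ring_path_algebra ring_path_algebra
        twist_ring_iso[where l = "inverse q" and m = 1 and m' = q and l' = 1] ideal_rel_ideal
        ideal_rel_ideal image] assms
    unfolding A_alg_def by auto
  have "twist (inverse q) 1 (scal c \<one>\<^bsub>path_algebra\<^esub>) = scal c \<one>\<^bsub>path_algebra\<^esub>" for c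
    by (rule ext) (simp add: twist_def scal_def path_algebra_simps path_swap_def arr_count_def)
  then have "A_alg_iso q (inverse q) \<Psi>"
    using \<Psi> \<Psi>_cls[OF scal_carrier[OF ring.ring_simprules(6)[OF ring_path_algebra]]]
    by unfold_locales (simp_all add: A_scalar_def)
  then show ?thesis using \<Psi>_cls by (rule that)
qed

lemma A_iso_imp_eq_or_inverse:
  fixes p q :: "'k::field"
  assumes "p \<noteq> 0" "q \<noteq> 0" and "A_iso q p"
  shows "p = q \<or> p = inverse q"
proof -
  obtain \<Phi> where "A_alg_iso q p \<Phi>"
    using assms(3) by (auto simp: A_iso_iff_A_alg_iso)
  then interpret A_alg_iso q p \<Phi> .
  consider "\<And>v u. \<theta> v (Ev u) = (if v = u then 1 else 0)"
    | "\<And>v u. \<theta> v (Ev u) = (if v = u then 0 else 1)"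
    using theta_Ev_cases by blast
  then show ?thesis
  proof cases
    case 1
    then show ?thesis by (rule eq_or_inverse_if_fixes_vertices[OF _ assms(2)])
  next
    case 2
    obtain \<Psi> where \<Psi>: "A_alg_iso p (inverse p) \<Psi>"
      and \<Psi>_cls: "\<And>f. f \<in> carrier path_algebra \<Longrightarrow>
        \<Psi> (cls p f) = cls (inverse p) (twist (inverse p) 1 f)"
      using twist_iso[OF assms(1)] by blast
    interpret \<Psi>: A_alg_iso p "inverse p" \<Psi> by (rule \<Psi>)
    interpret C: A_alg_iso q "inverse p" "\<Psi> \<circ> \<Phi>"
      by unfold_locales
        (simp_all add: ring_iso_set_trans[OF iso \<Psi>.iso] preserves_scalars \<Psi>.preserves_scalars)
    have "C.\<theta> v (Ev u) = \<theta> (vert_swap v) (Ev u)" for v u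
      using rep_cls_low[OF twist_carrier[where l = "inverse p" and m = 1,
            OF img_rep_closed[OF Ev_closed]], where ys = "[]" and p = "inverse p" and v = v]
      by (simp add: C.\<theta>_def \<theta>_def C.img_rep_def img_rep_def[symmetric] Phi_eq_cls_img_rep Ev_closed
          \<Psi>_cls img_rep_closed twist_def path_swap_def arr_count_def)
    then have "inverse p = q \<or> inverse p = inverse q"
      using 2 assms(2) by (intro C.eq_or_inverse_if_fixes_vertices) (auto simp: vert_swap_eq_iff)
    then show ?thesis
      by (metis inverse_inverse_eq)
  qed
qed

lemma A_iso_inverse:
  assumes "q \<noteq> 0"
  shows "A_iso q (inverse (q::'k::field))"
proof -
  obtain \<Psi> where "A_alg_iso q (inverse q) \<Psi>"
    using twist_iso[OF assms] by blast
  then show ?thesis by (auto simp: A_iso_iff_A_alg_iso)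
qed

lemma A_iso_refl: "A_iso q (q::'k::field)"
  unfolding A_iso_def using ring_iso_set_refl[of "A_alg q"] by (intro exI[of _ id]) simp

theorem proposition3p7:
  fixes p q :: "'k::field_char_0"
  assumes "alg_closed TYPE('k)"
    and "p \<noteq> 0" and "q \<noteq> 0"
  shows "A_iso q p \<longleftrightarrow> (p = q \<or> p = inverse q)"
  using A_iso_imp_eq_or_inverse[OF assms(2,3)] A_iso_refl[of q] A_iso_inverse[OF assms(3)] by auto

end
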